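(* Let $d=1$, $2\le p<\infty$. Let $W_1,W_2:\mathbb{R}\times\mathbb{R}\to\mathbb{R}$ be energy densities satisfying the standing assumptions in the context. For $i=1,2$ let $\zeta\mapsto\psi_i(y,\zeta)$ denote the reciprocal function of $\xi\mapsto\partial_\xi W_i(y,\xi)$. Assume that for $i=1,2$ and almost every $y\in(0,1)$: $\xi\mapsto W_i(y,\xi)$ attains its minimum at $\xi=0$, and $\xi\mapsto\partial^2_\xi W_i(y,\xi)$ is non-decreasing for $\xi\ge0$ and non-increasing for $\xi\le0$. Assume further that for all $\xi,\zeta\in\mathbb{R}$ and almost every $y\in(0,1)$, $$\xi\,\partial_\xi W_2(y,\xi)\ge\xi\,\partial_\xi W_1(y,\xi)\qquad\text{and}\qquad \partial^2_\xi W_2\big(y,\psi_2(y,\zeta)\big)\ge\partial^2_\xi W_1\big(y,\psi_1(y,\zeta)\big).$$ For $i=1,2$ define $$W_i^\star(\xi)=\inf\left\{\int_0^1 W_i\big(y,\xi+w'(y)\big)\,dy,\ \ w\in W^{1,p}_\#(0,1),\ \int_0^1 w=0\right\}.$$ Then for all $\xi\in\mathbb{R}$, $\partial^2_\xi W_2^\star(\xi)\ge\partial^2_\xi W_1^\star(\xi)$.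
   Context: Standing assumptions on an energy density $W(y,\xi)$: for every $\xi$, $y\mapsto W(y,\xi)$ is measurable and $1$-periodic; $W$ is $C^3$ in $\xi$; there exist $c_2\ge c_1>0$ with $c_1|\xi|^p\le W(y,\xi)\le c_2(1+|\xi|^p)$ for all $y,\xi$; and $\partial^2_\xi W(y,\xi)>0$ for all $\xi$ and a.e. $y$ (strict convexity), so that $\xi\mapsto\partial_\xi W(y,\xi)$ is increasing and has an increasing reciprocal function. $W^{1,p}_\#(0,1)$ is the set of $1$-periodic functions in $W^{1,p}_{\rm loc}(\mathbb{R})$. *)

theory Defs
  imports "HOL-Analysis.Analysis"
begin

definition energy_density :: "real \<Rightarrow> (real \<Rightarrow> real \<Rightarrow> real) \<Rightarrow> bool" where
  "energy_density p W \<longleftrightarrow>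
     (\<forall>\<xi>. (\<lambda>y. W y \<xi>) \<in> borel_measurable lborel) \<and>
     (\<forall>y \<xi>. W (y + 1) \<xi> = W y \<xi>) \<and>
     (\<forall>y. \<exists>D1 D2 D3. \<forall>\<xi>.
          (W y has_real_derivative D1 \<xi>) (at \<xi>) \<and>
          (D1 has_real_derivative D2 \<xi>) (at \<xi>) \<and>
          (D2 has_real_derivative D3 \<xi>) (at \<xi>) \<and> isCont D3 \<xi>) \<and>
     (\<exists>c1 c2. 0 < c1 \<and> c1 \<le> c2 \<and>
        (\<forall>y \<xi>. c1 * \<bar>\<xi>\<bar> powr p \<le> W y \<xi> \<and> W y \<xi> \<le> c2 * (1 + \<bar>\<xi>\<bar> powr p))) \<and>
     (AE y in lborel. \<forall>\<xi>. deriv (deriv (W y)) \<xi> > 0)"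

definition recip_psi :: "(real \<Rightarrow> real \<Rightarrow> real) \<Rightarrow> real \<Rightarrow> real \<Rightarrow> real" where
  "recip_psi W y \<zeta> = (THE \<xi>. deriv (W y) \<xi> = \<zeta>)"

text \<open>w (continuous representative) lies in W^{1,p}_#(0,1) with weak derivative w'.\<close>
definition W1p_per :: "real \<Rightarrow> (real \<Rightarrow> real) \<Rightarrow> (real \<Rightarrow> real) \<Rightarrow> bool" where
  "W1p_per p w w' \<longleftrightarrow>
     (\<forall>x. w (x + 1) = w x) \<and> (\<forall>x. w' (x + 1) = w' x) \<and>
     w' \<in> borel_measurable lborel \<and>
     set_integrable lborel {0..1} (\<lambda>y. \<bar>w' y\<bar> powr p) \<and>
     set_integrable lborel {0..1} w' \<and>
     (\<forall>x. w x = w 0 + (LBINT t=0..x. w' t))"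

definition Wstar :: "real \<Rightarrow> (real \<Rightarrow> real \<Rightarrow> real) \<Rightarrow> real \<Rightarrow> real" where
  "Wstar p W \<xi> = Inf {(LBINT y=0..1. W y (\<xi> + w' y)) | w w'.
                         W1p_per p w w' \<and> (LBINT y=0..1. w y) = 0}"

end

theory Submission
  imports Defs
begin

text \<open>In dimension one the cell problem is solved explicitly. Its Euler-Lagrange equation
  says that W'(y, \<xi> + w') is a constant \<sigma>, i.e. \<xi> + w' = \<psi>(y, \<sigma>), and the constraint that w'
  has mean zero determines \<sigma> = \<sigma>(\<xi>) by inverting the strictly increasing function
  \<Phi>(\<sigma>) = \<integral> \<psi>(y, \<sigma>) dy. The tangent inequality for each W(y, _) shows that W* is the
  upper envelope of the affine functions \<xi> \<mapsto> \<integral> W(y, \<psi>(y, \<sigma>)) dy + \<sigma> (\<xi> - \<Phi>(\<sigma>)),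
  touched at \<sigma>(\<xi>). Hence (W*)' = \<sigma> and (W*)'' = 1 / \<Phi>'(\<sigma>(\<xi>)), the harmonic mean of
  W''(y, \<psi>(y, \<sigma>(\<xi>))); it is 0 when \<integral> 1 / W'' diverges, which can only happen at \<xi> = 0.

  The hypothesis \<xi> W2' \<ge> \<xi> W1' gives \<psi>2 \<le> \<psi>1 for \<sigma> \<ge> 0 and the reverse for \<sigma> \<le> 0, so
  \<sigma>1(\<xi>) and \<sigma>2(\<xi>) have the sign of \<xi> and |\<sigma>1(\<xi>)| \<le> |\<sigma>2(\<xi>)|. Monotonicity of W2'' on
  each half line and the hypothesis on W''(y, \<psi>(y, \<zeta>)) then give pointwise
  1 / W2''(y, \<psi>2(y, \<sigma>2)) \<le> 1 / W2''(y, \<psi>2(y, \<sigma>1)) \<le> 1 / W1''(y, \<psi>1(y, \<sigma>1)),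
  and integrating and inverting yields the claim.\<close>

section \<open>Real functions and integrals on the line\<close>

lemma MVT_everywhere:
  fixes f f' :: "real \<Rightarrow> real"
  assumes "a < b" and d: "\<And>x. (f has_real_derivative f' x) (at x)"
  shows "\<exists>z. a < z \<and> z < b \<and> f b - f a = (b - a) * f' z"
proof -
  have "continuous_on {a..b} f"
    using d by (meson DERIV_isCont continuous_at_imp_continuous_on)
  moreover have "\<And>x. f differentiable (at x)" using d real_differentiable_def by blast
  ultimately obtain l z where "a < z" "z < b" "DERIV f z :> l" "f b - f a = (b - a) * l"
    using MVT[OF assms(1)] by blast
  moreover have "l = f' z" using DERIV_unique[OF \<open>DERIV f z :> l\<close> d] .
  ultimately show ?thesis by blast
qed

lemma has_real_derivative_if_supporting_slopes:
  fixes V s :: "real \<Rightarrow> real"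
  assumes lower: "\<And>\<eta>. s \<xi> * (\<eta> - \<xi>) \<le> V \<eta> - V \<xi>"
    and upper: "\<And>\<eta>. V \<eta> - V \<xi> \<le> s \<eta> * (\<eta> - \<xi>)"
    and cont: "isCont s \<xi>"
  shows "(V has_real_derivative s \<xi>) (at \<xi>)"
proof -
  let ?q = "\<lambda>h. (V (\<xi> + h) - V \<xi>) / h"
  have right: "s \<xi> \<le> ?q h \<and> ?q h \<le> s (\<xi> + h)" if "0 < h" for h
    using lower[of "\<xi> + h"] upper[of "\<xi> + h"] that by (simp add: field_simps)
  have left: "s (\<xi> + h) \<le> ?q h \<and> ?q h \<le> s \<xi>" if "h < 0" for h
    using lower[of "\<xi> + h"] upper[of "\<xi> + h"] that by (simp add: field_simps)
  have between: "min (s \<xi>) (s (\<xi> + h)) \<le> ?q h \<and> ?q h \<le> max (s \<xi>) (s (\<xi> + h))" if "h \<noteq> 0" for h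
    using right[of h] left[of h] that by (cases "0 < h") auto
  have s: "((\<lambda>h. s (\<xi> + h)) \<longlongrightarrow> s \<xi>) (at 0)" using cont by (simp add: isCont_iff)
  have "(?q \<longlongrightarrow> s \<xi>) (at 0)"
  proof (rule tendsto_sandwich)
    show "\<forall>\<^sub>F h in at 0. min (s \<xi>) (s (\<xi> + h)) \<le> ?q h" "\<forall>\<^sub>F h in at 0. ?q h \<le> max (s \<xi>) (s (\<xi> + h))"
      using between by (auto simp: eventually_at_filter)
    show "((\<lambda>h. min (s \<xi>) (s (\<xi> + h))) \<longlongrightarrow> s \<xi>) (at 0)" "((\<lambda>h. max (s \<xi>) (s (\<xi> + h))) \<longlongrightarrow> s \<xi>) (at 0)"
      using tendsto_min[OF tendsto_const[of "s \<xi>"] s] tendsto_max[OF tendsto_const[of "s \<xi>"] s] by simp_all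
  qed
  then show ?thesis by (simp add: DERIV_def)
qed

lemma abs_add_powr_le:
  fixes a b p :: real
  assumes "0 \<le> p"
  shows "\<bar>a + b\<bar> powr p \<le> 2 powr p * (\<bar>a\<bar> powr p + \<bar>b\<bar> powr p)"
proof -
  have "\<bar>a + b\<bar> \<le> 2 * max \<bar>a\<bar> \<bar>b\<bar>" by linarith
  then have "\<bar>a + b\<bar> powr p \<le> (2 * max \<bar>a\<bar> \<bar>b\<bar>) powr p" using powr_mono2[OF assms abs_ge_zero] by blast
  also have "\<dots> = 2 powr p * max \<bar>a\<bar> \<bar>b\<bar> powr p" by (simp add: powr_mult)
  also have "max \<bar>a\<bar> \<bar>b\<bar> powr p \<le> \<bar>a\<bar> powr p + \<bar>b\<bar> powr p"
    by (cases "\<bar>a\<bar> \<le> \<bar>b\<bar>") (auto simp: max_def)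
  then have "2 powr p * max \<bar>a\<bar> \<bar>b\<bar> powr p \<le> 2 powr p * (\<bar>a\<bar> powr p + \<bar>b\<bar> powr p)"
    by (rule mult_left_mono) simp
  finally show ?thesis .
qed

lemma floor_mult_div_LIMSEQ:
  fixes x :: real
  shows "(\<lambda>n. real_of_int \<lfloor>real (Suc n) * x\<rfloor> / real (Suc n)) \<longlonglongrightarrow> x"
proof (rule tendsto_sandwich[where f="\<lambda>n. x + - inverse (real (Suc n))" and h="\<lambda>n. x"])
  show "\<forall>\<^sub>F n in sequentially. x + - inverse (real (Suc n)) \<le> real_of_int \<lfloor>real (Suc n) * x\<rfloor> / real (Suc n)"
  proof (intro always_eventually allI)
    fix n
    have "real (Suc n) * x - 1 \<le> real_of_int \<lfloor>real (Suc n) * x\<rfloor>" by linarith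
    then have "(real (Suc n) * x - 1) / real (Suc n) \<le> real_of_int \<lfloor>real (Suc n) * x\<rfloor> / real (Suc n)"
      by (rule divide_right_mono) simp
    moreover have "(real (Suc n) * x - 1) / real (Suc n) = x + - inverse (real (Suc n))"
      by (simp add: field_simps del: of_nat_Suc)
    ultimately show "x + - inverse (real (Suc n)) \<le> real_of_int \<lfloor>real (Suc n) * x\<rfloor> / real (Suc n)"
      by simp
  qed
  show "\<forall>\<^sub>F n in sequentially. real_of_int \<lfloor>real (Suc n) * x\<rfloor> / real (Suc n) \<le> x"
  proof (intro always_eventually allI)
    fix n
    have "real_of_int \<lfloor>real (Suc n) * x\<rfloor> \<le> real (Suc n) * x" by linarith
    then show "real_of_int \<lfloor>real (Suc n) * x\<rfloor> / real (Suc n) \<le> x"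
      by (simp add: field_simps)
  qed
  show "(\<lambda>n. x + - inverse (real (Suc n))) \<longlonglongrightarrow> x" by (rule LIMSEQ_inverse_real_of_nat_add_minus)
qed simp

lemma borel_measurable_caratheodory:
  fixes g :: "'a \<Rightarrow> real \<Rightarrow> real"
  assumes g: "\<And>t. (\<lambda>y. g y t) \<in> borel_measurable M" and c: "\<And>y t. isCont (g y) t"
    and u: "u \<in> borel_measurable M"
  shows "(\<lambda>y. g y (u y)) \<in> borel_measurable M"
proof (rule borel_measurable_LIMSEQ_real)
  fix y
  show "(\<lambda>n. g y (real_of_int \<lfloor>real (Suc n) * u y\<rfloor> / real (Suc n))) \<longlonglongrightarrow> g y (u y)"
    by (rule isCont_tendsto_compose[OF c floor_mult_div_LIMSEQ])
next
  fix n
  have fl: "(\<lambda>y. \<lfloor>real (Suc n) * u y\<rfloor>) \<in> measurable M (count_space UNIV)"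
    using measurable_compose[OF borel_measurable_times[OF borel_measurable_const u] measurable_real_floor] 
    by simp
  show "(\<lambda>y. g y (real_of_int \<lfloor>real (Suc n) * u y\<rfloor> / real (Suc n))) \<in> borel_measurable M"
    using measurable_compose_countable'[where f="\<lambda>k y. g y (real_of_int k / real (Suc n))", OF g fl]
    by simp
qed

lemma borel_measurable_derivative:
  fixes g :: "'a \<Rightarrow> real \<Rightarrow> real"
  assumes g: "\<And>t. (\<lambda>y. g y t) \<in> borel_measurable M"
    and d: "\<And>y. (g y has_real_derivative g' y) (at t)"
  shows "g' \<in> borel_measurable M"
proof (rule borel_measurable_LIMSEQ_real)
  fix y
  have "((\<lambda>h. (g y (t + h) - g y t) / h) \<longlongrightarrow> g' y) (at 0)"
    using d[of y] by (simp add: DERIV_def)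
  then have "\<forall>X. (\<forall>i. X i \<in> UNIV - {0}) \<longrightarrow> X \<longlonglongrightarrow> 0 \<longrightarrow> 
      ((\<lambda>h. (g y (t + h) - g y t) / h) \<circ> X) \<longlonglongrightarrow> g' y"
    unfolding tendsto_at_iff_sequentially .
  from this[rule_format, of "\<lambda>n. inverse (real (Suc n))"]
  have "((\<lambda>h. (g y (t + h) - g y t) / h) \<circ> (\<lambda>n. inverse (real (Suc n)))) \<longlonglongrightarrow> g' y"
    using LIMSEQ_inverse_real_of_nat by simp
  then show "(\<lambda>n. (g y (t + inverse (real (Suc n))) - g y t) / inverse (real (Suc n))) \<longlonglongrightarrow> g' y"
    by (simp add: comp_def)
next
  fix n
  show "(\<lambda>y. (g y (t + inverse (real (Suc n))) - g y t) / inverse (real (Suc n))) \<in> borel_measurable M"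
    using g by measurable
qed

lemma integral_isCont_dominated:
  fixes f :: "real \<Rightarrow> 'a \<Rightarrow> real"
  assumes meas: "\<And>h. f h \<in> borel_measurable M" and gi: "integrable M g"
    and r: "0 < r" and dom: "AE x in M. \<forall>h. \<bar>h - h0\<bar> < r \<longrightarrow> \<bar>f h x\<bar> \<le> g x"
    and cont: "AE x in M. isCont (\<lambda>h. f h x) h0"
  shows "isCont (\<lambda>h. integral\<^sup>L M (f h)) h0"
proof (rule continuous_at_sequentiallyI)
  fix X :: "nat \<Rightarrow> real" assume X: "X \<longlonglongrightarrow> h0"
  define Y where "Y n = (if \<bar>X n - h0\<bar> < r then X n else h0)" for n
  have ev: "\<forall>\<^sub>F n in sequentially. \<bar>X n - h0\<bar> < r"
    using X r unfolding tendsto_iff dist_real_def by auto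
  then have evY: "\<forall>\<^sub>F n in sequentially. Y n = X n" by eventually_elim (simp add: Y_def)
  have Y: "(\<lambda>n. Y n) \<longlonglongrightarrow> h0" using tendsto_cong[OF evY, THEN iffD2, OF X] .
  have "(\<lambda>n. integral\<^sup>L M (f (Y n))) \<longlonglongrightarrow> integral\<^sup>L M (f h0)"
  proof (rule integral_dominated_convergence[where w=g])
    show "f h0 \<in> borel_measurable M" "\<And>n. f (Y n) \<in> borel_measurable M" by (rule meas)+
    show "integrable M g" by (rule gi)
    show "AE x in M. (\<lambda>n. f (Y n) x) \<longlonglongrightarrow> f h0 x"
      using cont by eventually_elim (rule isCont_tendsto_compose[OF _ Y])
    show "AE x in M. norm (f (Y n) x) \<le> g x" for n
      using dom by eventually_elim (auto simp: Y_def r)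
  qed
  moreover have ev2: "\<forall>\<^sub>F n in sequentially. integral\<^sup>L M (f (Y n)) = integral\<^sup>L M (f (X n))"
    using evY by eventually_elim simp
  ultimately show "(\<lambda>n. integral\<^sup>L M (f (X n))) \<longlonglongrightarrow> integral\<^sup>L M (f h0)"
    using tendsto_cong[OF ev2, THEN iffD1] by blast
qed

lemma integral_truncation_unbounded:
  fixes f :: "'a \<Rightarrow> real"
  assumes "finite_measure M" and f: "f \<in> borel_measurable M" and nonneg: "\<And>x. 0 \<le> f x"
    and not_int: "\<not> integrable M f"
  shows "\<exists>n::nat. K < integral\<^sup>L M (\<lambda>x. min (f x) (real n))"
proof (rule ccontr)
  interpret finite_measure M by (rule assms(1))
  define g where "g n = (\<lambda>x. min (f x) (real n))" for n :: nat
  have g: "g n \<in> borel_measurable M" for n unfolding g_def using f by measurable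
  have int_g: "integrable M (g n)" for n
    by (rule integrable_const_bound[where B="real n"]) (use g nonneg in \<open>auto simp: g_def\<close>)
  assume "\<not> (\<exists>n. K < integral\<^sup>L M (\<lambda>x. min (f x) (real n)))"
  then have bounded: "integral\<^sup>L M (g n) \<le> K" for n by (simp add: g_def not_less)
  have "incseq (\<lambda>n. integral\<^sup>L M (g n))"
    by (intro incseq_SucI integral_mono int_g) (auto simp: g_def)
  then have "(\<lambda>n. integral\<^sup>L M (g n)) \<longlonglongrightarrow> (SUP n. integral\<^sup>L M (g n))"
    by (rule LIMSEQ_incseq_SUP[rotated]) (use bounded in \<open>auto simp: bdd_above_def\<close>)
  moreover have "(\<lambda>n. g n x) \<longlonglongrightarrow> f x" for x
  proof (rule tendsto_eventually)
    show "\<forall>\<^sub>F n in sequentially. g n x = f x"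
      using eventually_ge_at_top[of "nat \<lceil>f x\<rceil>"]
      by eventually_elim (use real_nat_ceiling_ge[of "f x"] in \<open>auto simp: g_def min_def\<close>)
  qed
  ultimately have "integrable M f"
    by (intro integrable_monotone_convergence[OF int_g _ _ _ f])
       (auto simp: g_def mono_def intro: min.mono)
  with not_int show False by simp
qed

lemma set_integrable_bounded:
  fixes f :: "real \<Rightarrow> real"
  assumes f: "f \<in> borel_measurable lborel" and B: "\<And>x. \<bar>f x\<bar> \<le> B"
    and S: "S \<in> sets lborel" "emeasure lborel S < \<infinity>"
  shows "set_integrable lborel S f"
proof -
  have i: "integrable lborel (\<lambda>x. B * indicator S x :: real)" using S by simp
  have m: "(\<lambda>x. indicator S x *\<^sub>R f x) \<in> borel_measurable lborel" using f S by measurable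
  have a: "AE x in lborel. norm (indicator S x *\<^sub>R f x) \<le> norm (B * indicator S x :: real)"
    using B by (auto simp: indicator_def abs_mult intro: order_trans[OF _ abs_ge_self])
  show ?thesis unfolding set_integrable_def by (rule Bochner_Integration.integrable_bound[OF i m a])
qed

lemma interval_integrable_bounded:
  fixes f :: "real \<Rightarrow> real"
  assumes f: "f \<in> borel_measurable lborel" and B: "\<And>x. \<bar>f x\<bar> \<le> B"
  shows "interval_lebesgue_integrable lborel (ereal a) (ereal b) f"
  unfolding interval_lebesgue_integrable_def
  by (auto intro!: set_integrable_bounded[OF f B])

text \<open>The hull of three endpoints is the form required by interval_integral_sum.\<close>

lemma interval_integrable_bounded_hull:
  fixes f :: "real \<Rightarrow> real"
  assumes f: "f \<in> borel_measurable lborel" and B: "\<And>x. \<bar>f x\<bar> \<le> B"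
  shows "interval_lebesgue_integrable lborel (min (ereal a) (min (ereal b) (ereal c))) 
           (max (ereal a) (max (ereal b) (ereal c))) f"
  using interval_integrable_bounded[OF f B, of "min a (min b c)" "max a (max b c)"]
  by (simp del: ereal_min ereal_max add: ereal_min[symmetric] ereal_max[symmetric])

lemma interval_integral_periodic_shift:
  fixes f :: "real \<Rightarrow> real"
  assumes per: "\<And>x. f (x + c) = f x" and ab: "a \<le> b"
  shows "(LBINT t=ereal (a + c)..ereal (b + c). f t) = (LBINT t=ereal a..ereal b. f t)"
proof -
  have "(LBINT t=ereal (a + c)..ereal (b + c). f t) = 
      integral\<^sup>L lborel (\<lambda>x. indicator {a+c<..<b+c} x *\<^sub>R f x)"
    using ab by (simp add: interval_lebesgue_integral_def set_lebesgue_integral_def)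
  also have "\<dots> = integral\<^sup>L lborel (\<lambda>x. indicator {a+c<..<b+c} (c + 1 * x) *\<^sub>R f (c + 1 * x))"
    using lborel_integral_real_affine[where c=1 and t=c] by simp
  also have "\<dots> = integral\<^sup>L lborel (\<lambda>x. indicator {a<..<b} x *\<^sub>R f x)"
    using per by (intro Bochner_Integration.integral_cong) (auto simp: indicator_def add.commute)
  also have "\<dots> = (LBINT t=ereal a..ereal b. f t)"
    using ab by (simp add: interval_lebesgue_integral_def set_lebesgue_integral_def)
  finally show ?thesis .
qed

lemma interval_integral_periodic:
  fixes f :: "real \<Rightarrow> real"
  assumes per: "\<And>x (n::int). f (x + of_int n) = f x"
    and f: "f \<in> borel_measurable lborel" and B: "\<And>x. \<bar>f x\<bar> \<le> B"
  shows "(LBINT t=ereal x..ereal (x + 1). f t) = (LBINT t=0..1. f t)"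
proof -
  define s where "s = frac x"
  have s: "0 \<le> s" "s < 1" unfolding s_def by (auto simp: frac_lt_1)
  have x: "x = s + of_int \<lfloor>x\<rfloor>" unfolding s_def by (simp add: frac_def)
  have "(LBINT t=ereal x..ereal (x + 1). f t) = (LBINT t=ereal (s + of_int \<lfloor>x\<rfloor>)..ereal ((s + 1) + of_int \<lfloor>x\<rfloor>). f t)"
  proof -
    have "x + 1 = (s + 1) + of_int \<lfloor>x\<rfloor>" using x by simp
    then show ?thesis using x by metis
  qed
  also have "\<dots> = (LBINT t=ereal s..ereal (s + 1). f t)"
    by (rule interval_integral_periodic_shift) (auto simp: per)
  also have "\<dots> = (LBINT t=ereal s..ereal 1. f t) + (LBINT t=ereal 1..ereal (s + 1). f t)"
    by (rule interval_integral_sum[symmetric]) (rule interval_integrable_bounded_hull[OF f B])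
  also have "(LBINT t=ereal 1..ereal (s + 1). f t) = (LBINT t=ereal (0 + 1)..ereal (s + 1). f t)" by simp
  also have "\<dots> = (LBINT t=ereal 0..ereal s. f t)"
    by (rule interval_integral_periodic_shift) (auto simp: s per[of _ 1, simplified])
  also have "(LBINT t=ereal s..ereal 1. f t) + (LBINT t=ereal 0..ereal s. f t) = 
     (LBINT t=ereal 0..ereal s. f t) + (LBINT t=ereal s..ereal 1. f t)" by simp
  also have "\<dots> = (LBINT t=ereal 0..ereal 1. f t)"
    by (rule interval_integral_sum) (rule interval_integrable_bounded_hull[OF f B])
  finally show ?thesis by (simp add: zero_ereal_def one_ereal_def)
qed

lemma abs_interval_integral_le:
  fixes f :: "real \<Rightarrow> real"
  assumes f: "f \<in> borel_measurable lborel" and B: "\<And>x. \<bar>f x\<bar> \<le> B"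
  shows "\<bar>LBINT t=ereal a..ereal b. f t\<bar> \<le> B * \<bar>b - a\<bar>"
proof -
  have gen: "\<bar>LINT t:{c<..<d}|lborel. f t\<bar> \<le> B * (d - c)" if "c \<le> d" for c d
  proof -
    have i: "set_integrable lborel {c<..<d} f" by (rule set_integrable_bounded[OF f B]) (use that in auto)
    have i2: "set_integrable lborel {c<..<d} (\<lambda>t. \<bar>f t\<bar>)"
      by (rule set_integrable_bounded[of _ B]) (use that f B in \<open>auto intro: borel_measurable_abs\<close>)
    have i3: "set_integrable lborel {c<..<d} (\<lambda>t. B)"
      by (rule set_integrable_bounded[of _ "\<bar>B\<bar>"]) (use that in auto)
    have "\<bar>LINT t:{c<..<d}|lborel. f t\<bar> \<le> (LINT t:{c<..<d}|lborel. \<bar>f t\<bar>)"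
      using set_integral_norm_bound[OF i] by simp
    also have "\<dots> \<le> (LINT t:{c<..<d}|lborel. B)"
      by (rule set_integral_mono[OF i2 i3]) (rule B)
    also have "\<dots> = B * (d - c)" using that by (simp add: set_integral_const)
    finally show ?thesis .
  qed
  show ?thesis
  proof (cases "a \<le> b")
    case True then show ?thesis using gen[of a b] by (simp add: interval_lebesgue_integral_def)
  next
    case False then show ?thesis using gen[of b a] by (simp add: interval_lebesgue_integral_def)
  qed
qed

lemma continuous_on_interval_integral_bounded:
  fixes f :: "real \<Rightarrow> real"
  assumes f: "f \<in> borel_measurable lborel" and B: "\<And>x. \<bar>f x\<bar> \<le> B"
  shows "continuous_on UNIV (\<lambda>x. LBINT t=ereal c..ereal x. f t)"
proof -
  have B0: "0 \<le> B" using B[of 0] by simp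
  have "B-lipschitz_on UNIV (\<lambda>x. LBINT t=ereal c..ereal x. f t)"
  proof (rule lipschitz_onI)
    fix x y :: real
    have "(LBINT t=ereal c..ereal y. f t) + (LBINT t=ereal y..ereal x. f t) = (LBINT t=ereal c..ereal x. f t)"
      by (rule interval_integral_sum) (rule interval_integrable_bounded_hull[OF f B])
    then have "dist (LBINT t=ereal c..ereal x. f t) (LBINT t=ereal c..ereal y. f t) = \<bar>LBINT t=ereal y..ereal x. f t\<bar>"
      by (simp add: dist_real_def)
    also have "\<dots> \<le> B * \<bar>x - y\<bar>" by (rule abs_interval_integral_le[OF f B])
    finally show "dist (LBINT t=ereal c..ereal x. f t) (LBINT t=ereal c..ereal y. f t) \<le> B * dist x y"
      by (simp add: dist_real_def)
  qed (rule B0)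
  then show ?thesis by (rule lipschitz_on_continuous_on)
qed

section \<open>The unit cell and periodic Sobolev functions\<close>

abbreviation unit_cell :: "real measure" where
  "unit_cell \<equiv> restrict_space lborel {0..1}"

lemma AE_unit_cellI:
  assumes "AE y in lborel. y \<in> {0<..<1} \<longrightarrow> P y"
  shows "AE y in unit_cell. P y"
proof -
  have "AE y in lborel. y \<noteq> 0" "AE y in lborel. y \<noteq> 1" by (rule AE_lborel_singleton)+
  with assms have "AE y in lborel. y \<in> {0..1} \<longrightarrow> P y" by eventually_elim auto
  then show ?thesis by (subst AE_restrict_space_iff) auto
qed

lemma finite_measure_unit_cell: "finite_measure unit_cell"
  by (rule finite_measureI) (simp add: emeasure_restrict_space)

lemma measure_space_unit_cell: "measure unit_cell (space unit_cell) = 1"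
  by (simp add: measure_def emeasure_restrict_space)

lemma LBINT_01_eq_unit_cell: "(LBINT y=0..1. f y) = integral\<^sup>L unit_cell f"
proof -
  have "(LBINT y=0..1. f y) = (LBINT y=ereal 0..ereal 1. f y)" by (simp only: zero_ereal_def one_ereal_def)
  also have "\<dots> = (LBINT y:{0..1}. f y)" by (rule interval_integral_Icc) simp
  also have "\<dots> = integral\<^sup>L unit_cell f" unfolding set_lebesgue_integral_def
    by (rule integral_restrict_space[symmetric]) simp
  finally show ?thesis .
qed

lemma set_integrable_01_iff_unit_cell:
  "set_integrable lborel {0..1} f \<longleftrightarrow> integrable unit_cell (f :: real \<Rightarrow> real)"
  unfolding set_integrable_def using integrable_restrict_space[of "{0..1}" lborel f] by simp

lemma borel_measurable_unit_cell: "f \<in> borel_measurable lborel \<Longrightarrow> f \<in> borel_measurable unit_cell"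
  by (rule measurable_restrict_space1)

lemma W1p_per_integrable:
  assumes "W1p_per p w w'"
  shows "integrable unit_cell w'" "integrable unit_cell (\<lambda>y. \<bar>w' y\<bar> powr p)"
    and "integral\<^sup>L unit_cell w' = 0"
proof -
  have "set_integrable lborel {0..1} w'" "set_integrable lborel {0..1} (\<lambda>y. \<bar>w' y\<bar> powr p)"
    and per: "w (0 + 1) = w 0" and rep: "w 1 = w 0 + (LBINT t=0..ereal 1. w' t)"
    using assms unfolding W1p_per_def by blast+
  then show "integrable unit_cell w'" "integrable unit_cell (\<lambda>y. \<bar>w' y\<bar> powr p)"
    by (simp_all add: set_integrable_01_iff_unit_cell)
  have "(LBINT t=0..1. w' t) = 0" using rep per by (simp add: one_ereal_def)
  then show "integral\<^sup>L unit_cell w' = 0" by (simp add: LBINT_01_eq_unit_cell)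
qed

lemma borel_measurable_frac: "(\<lambda>y::real. frac y) \<in> borel_measurable borel"
  unfolding frac_def using borel_measurable_real_floor by measurable

lemma AE_unit_cell_frac: "AE y in unit_cell. f (frac y) = f y"
proof (rule AE_unit_cellI)
  show "AE y in lborel. y \<in> {0<..<1} \<longrightarrow> f (frac y) = f y"
    by (rule AE_I2) (simp add: frac_eq)
qed

lemma interval_integral_periodic_primitive:
  fixes v :: "real \<Rightarrow> real"
  assumes v: "v \<in> borel_measurable lborel" and bound: "\<And>x. \<bar>v x\<bar> \<le> B"
    and per: "\<And>x (n::int). v (x + of_int n) = v x" and mean: "(LBINT t=0..1. v t) = 0"
  shows "(LBINT t=ereal 0..ereal (x + 1). v t) = (LBINT t=ereal 0..ereal x. v t)"
proof -
  have "(LBINT t=ereal 0..ereal x. v t) + (LBINT t=ereal x..ereal (x + 1). v t)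
      = (LBINT t=ereal 0..ereal (x + 1). v t)"
    by (rule interval_integral_sum) (rule interval_integrable_bounded_hull[OF v bound])
  moreover have "(LBINT t=ereal x..ereal (x + 1). v t) = (LBINT t=0..1. v t)"
    by (rule interval_integral_periodic[OF per v bound])
  ultimately show ?thesis using mean by simp
qed

lemma W1p_per_primitive:
  fixes v :: "real \<Rightarrow> real"
  assumes v: "v \<in> borel_measurable lborel" and bound: "\<And>x. \<bar>v x\<bar> \<le> B"
    and per: "\<And>x (n::int). v (x + of_int n) = v x" and mean: "(LBINT t=0..1. v t) = 0"
    and p: "0 \<le> p"
  shows "\<exists>w. W1p_per p w v \<and> (LBINT y=0..1. w y) = 0"
proof -
  interpret finite_measure unit_cell by (rule finite_measure_unit_cell)
  define F where "F x = (LBINT t=ereal 0..ereal x. v t)" for x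
  have "continuous_on UNIV F" unfolding F_def by (rule continuous_on_interval_integral_bounded[OF v bound])
  then have "F \<in> borel_measurable lborel"
    using borel_measurable_continuous_onI by (simp add: measurable_lborel1)
  moreover have "\<bar>F x\<bar> \<le> B" if "x \<in> {0..1}" for x
  proof -
    have "B * x \<le> B" using bound[of 0] that by (simp add: mult_left_le)
    then show ?thesis using abs_interval_integral_le[OF v bound, of 0 x] that by (simp add: F_def)
  qed
  ultimately have int_F: "integrable unit_cell F"
    by (intro integrable_const_bound[where B=B]) (auto simp: space_restrict_space borel_measurable_unit_cell)
  define w where "w x = F x - integral\<^sup>L unit_cell F" for x
  have "W1p_per p w v"
    unfolding W1p_per_def
  proof (intro conjI allI)
    show "w (x + 1) = w x" for x
      using interval_integral_periodic_primitive[OF v bound per mean] by (simp add: w_def F_def)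
    show "v (x + 1) = v x" for x using per[of x 1] by simp
    show "set_integrable lborel {0..1} (\<lambda>y. \<bar>v y\<bar> powr p)"
      by (rule set_integrable_bounded[where B="B powr p"]) (use v bound p in \<open>auto simp: powr_mono2\<close>)
    show "set_integrable lborel {0..1} v" by (rule set_integrable_bounded[OF v bound]) auto
    show "w x = w 0 + (LBINT t=0..ereal x. v t)" for x
      by (simp add: w_def F_def zero_ereal_def interval_lebesgue_integral_def einterval_same set_lebesgue_integral_def)
  qed (rule v)
  moreover have "(LBINT y=0..1. w y) = 0"
    unfolding LBINT_01_eq_unit_cell w_def using int_F measure_space_unit_cell by simp
  ultimately show ?thesis by blast
qed

section \<open>Strictly convex cell energies\<close>

locale cell_energy =
  fixes f :: "real \<Rightarrow> real" and p c1 c2 :: real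
  assumes p2: "2 \<le> p" and c1: "0 < c1"
    and d1: "\<And>x. (f has_real_derivative deriv f x) (at x)"
    and d2: "\<And>x. (deriv f has_real_derivative deriv (deriv f) x) (at x)"
    and pos: "\<And>x. deriv (deriv f) x > 0"
    and growl: "\<And>x. c1 * \<bar>x\<bar> powr p \<le> f x"
    and growu: "\<And>x. f x \<le> c2 * (1 + \<bar>x\<bar> powr p)"
    and min0: "\<And>x. f 0 \<le> f x"
    and monop: "\<And>a b. 0 \<le> a \<Longrightarrow> a \<le> b \<Longrightarrow> deriv (deriv f) a \<le> deriv (deriv f) b"
    and monon: "\<And>a b. a \<le> b \<Longrightarrow> b \<le> 0 \<Longrightarrow> deriv (deriv f) b \<le> deriv (deriv f) a"
begin

abbreviation "f1 \<equiv> deriv f"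

abbreviation "f2 \<equiv> deriv (deriv f)"

lemma f1_less: assumes "a < b" shows "f1 a < f1 b"
proof -
  obtain z where "f1 b - f1 a = (b - a) * f2 z" using MVT_everywhere[OF assms d2] by blast
  moreover have "(b - a) * f2 z > 0" using assms pos[of z] by simp
  ultimately show ?thesis by simp
qed

lemma strict_mono_f1: "strict_mono f1"
  by (rule strict_monoI) (rule f1_less)

lemma f1_le_iff: "f1 a \<le> f1 b \<longleftrightarrow> a \<le> b"
  by (rule strict_mono_less_eq[OF strict_mono_f1])

lemma f1_less_iff: "f1 a < f1 b \<longleftrightarrow> a < b"
  by (rule strict_mono_less[OF strict_mono_f1])

lemma f1_eq_iff: "f1 a = f1 b \<longleftrightarrow> a = b"
  by (rule strict_mono_eq[OF strict_mono_f1])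

lemma f1_cont: "isCont f1 x" using d2 DERIV_isCont by blast

lemma f_nonneg: "0 \<le> f x"
proof -
  have "0 \<le> c1 * \<bar>x\<bar> powr p" using c1 by simp
  then show ?thesis using growl[of x] by linarith
qed

lemma f0_le: "f 0 \<le> c2" using growu[of 0] by simp

lemma f1_0: "f1 0 = 0"
  by (rule DERIV_local_min[OF d1[of 0] zero_less_one]) (auto simp: min0)

lemma tangent_le: "f t \<ge> f a + f1 a * (t - a)"
proof (cases t a rule: linorder_cases)
  case less
  then obtain z where z: "t < z" "z < a" "f a - f t = (a - t) * f1 z" using MVT_everywhere[OF _ d1] by blast
  have "f1 z \<le> f1 a" using z f1_le_iff by simp
  then have "(a - t) * f1 z \<le> (a - t) * f1 a" using less by (simp add: mult_left_mono)
  then show ?thesis using z by (simp add: algebra_simps)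
next
  case greater
  then obtain z where z: "a < z" "z < t" "f t - f a = (t - a) * f1 z" using MVT_everywhere[OF _ d1] by blast
  have "f1 a \<le> f1 z" using z f1_le_iff by simp
  then have "(t - a) * f1 a \<le> (t - a) * f1 z" using greater by (simp add: mult_left_mono)
  then show ?thesis using z by (simp add: algebra_simps)
qed simp

lemma f1_ge_linear: assumes "1 \<le> s" shows "f1 s \<ge> c1 * s - c2"
proof -
  obtain z where z: "0 < z" "z < s" "f s - f 0 = s * f1 z" using MVT_everywhere[OF _ d1, of 0 s] assms by auto
  have "f1 z \<le> f1 s" using z f1_le_iff by simp
  have "s powr 2 \<le> s powr p" using assms p2 by (intro powr_mono) auto
  then have "c1 * s^2 \<le> c1 * \<bar>s\<bar> powr p" using assms c1 by (simp add: powr_numeral)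
  moreover have "s * f1 z \<le> s * f1 s" using \<open>f1 z \<le> f1 s\<close> assms by (simp add: mult_left_mono)
  ultimately have "c1 * s^2 - c2 \<le> s * f1 s"
    using growl[of s] f0_le z by linarith
  then have "c1 * s - c2 / s \<le> f1 s" using assms
    by (simp add: field_simps power2_eq_square)
  moreover have "c2 / s \<le> c2" 
    using assms f0_le f_nonneg[of 0] by (simp add: divide_le_eq mult_le_cancel_left1 order_trans)
  ultimately show ?thesis by simp
qed

lemma f1_neg_le_linear: assumes "1 \<le> s" shows "f1 (-s) \<le> -(c1 * s - c2)"
proof -
  obtain z where z: "-s < z" "z < 0" "f 0 - f (-s) = s * f1 z" using MVT_everywhere[OF _ d1, of "-s" 0] assms by auto
  have "f1 (-s) \<le> f1 z" using z f1_le_iff by simp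
  have "s powr 2 \<le> s powr p" using assms p2 by (intro powr_mono) auto
  then have "c1 * s^2 \<le> c1 * \<bar>-s\<bar> powr p" using assms c1 by (simp add: powr_numeral)
  moreover have "s * f1 (-s) \<le> s * f1 z" using \<open>f1 (-s) \<le> f1 z\<close> assms by (simp add: mult_left_mono)
  ultimately have "c1 * s^2 - c2 \<le> - s * f1 (-s)"
    using growl[of "-s"] f0_le z by linarith
  then have "c1 * s - c2 / s \<le> - f1 (-s)" using assms
    by (simp add: field_simps power2_eq_square)
  moreover have "c2 / s \<le> c2" 
    using assms f0_le f_nonneg[of 0] by (simp add: divide_le_eq mult_le_cancel_left1 order_trans)
  ultimately show ?thesis by simp
qed

definition "psi_bound \<sigma> = max 1 ((\<bar>\<sigma>\<bar> + c2) / c1)"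

lemma f1_psi_bound: "f1 (psi_bound \<sigma>) \<ge> \<bar>\<sigma>\<bar>" "f1 (- psi_bound \<sigma>) \<le> - \<bar>\<sigma>\<bar>"
proof -
  have b1: "1 \<le> psi_bound \<sigma>" "(\<bar>\<sigma>\<bar> + c2) / c1 \<le> psi_bound \<sigma>" unfolding psi_bound_def by auto
  then have b: "1 \<le> psi_bound \<sigma>" "c1 * psi_bound \<sigma> \<ge> \<bar>\<sigma>\<bar> + c2" using c1
    by (auto simp: pos_divide_le_eq mult.commute)
  show "f1 (psi_bound \<sigma>) \<ge> \<bar>\<sigma>\<bar>" using f1_ge_linear[OF b(1)] b(2) by simp
  show "f1 (- psi_bound \<sigma>) \<le> - \<bar>\<sigma>\<bar>" using f1_neg_le_linear[OF b(1)] b(2) by simp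
qed

lemma ex1_f1_eq: "\<exists>!t. f1 t = \<sigma>"
proof -
  have c: "continuous_on {- psi_bound \<sigma> .. psi_bound \<sigma>} f1" 
    using f1_cont by (simp add: continuous_at_imp_continuous_on)
  have b: "- psi_bound \<sigma> \<le> psi_bound \<sigma>" unfolding psi_bound_def by auto
  have l: "f1 (- psi_bound \<sigma>) \<le> \<sigma>" "\<sigma> \<le> f1 (psi_bound \<sigma>)" using f1_psi_bound[of \<sigma>] by linarith+
  obtain t where t: "f1 t = \<sigma>" using IVT'[of f1 "- psi_bound \<sigma>" \<sigma> "psi_bound \<sigma>", OF l b c] by blast
  show ?thesis
  proof (rule ex1I[of _ t])
    show "f1 t = \<sigma>" by (rule t)
    show "\<And>u. f1 u = \<sigma> \<Longrightarrow> u = t" using t f1_eq_iff by metis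
  qed
qed

definition "psi \<sigma> = (THE t. f1 t = \<sigma>)"

lemma f1_psi[simp]: "f1 (psi \<sigma>) = \<sigma>"
  unfolding psi_def by (rule theI') (rule ex1_f1_eq)

lemma psi_f1[simp]: "psi (f1 t) = t"
  using f1_psi[of "f1 t"] f1_eq_iff by metis

lemma psi_le_iff: "psi a \<le> psi b \<longleftrightarrow> a \<le> b"
  by (metis f1_le_iff f1_psi)

lemma psi_less_iff: "psi a < psi b \<longleftrightarrow> a < b"
  by (metis f1_less_iff f1_psi)

lemma psi_0[simp]: "psi 0 = 0" using psi_f1[of 0] f1_0 by simp

lemma abs_psi_le_bound: "\<bar>psi \<sigma>\<bar> \<le> psi_bound \<sigma>"
proof -
  have "f1 (psi \<sigma>) \<le> f1 (psi_bound \<sigma>)" "f1 (- psi_bound \<sigma>) \<le> f1 (psi \<sigma>)" using f1_psi_bound[of \<sigma>] by auto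
  then show ?thesis unfolding f1_le_iff by linarith
qed

lemma psi_nonneg: "0 \<le> \<sigma> \<Longrightarrow> 0 \<le> psi \<sigma>" using psi_le_iff[of 0 \<sigma>] by simp

lemma psi_nonpos: "\<sigma> \<le> 0 \<Longrightarrow> psi \<sigma> \<le> 0" using psi_le_iff[of \<sigma> 0] by simp

lemma psi_cont: "isCont psi \<sigma>"
proof -
  have "isCont psi (f1 (psi \<sigma>))"
    by (rule isCont_inverse_function[where d=1]) (auto intro: f1_cont)
  then show ?thesis by simp
qed

definition "dpsi \<sigma> = 1 / f2 (psi \<sigma>)"

lemma psi_deriv: "(psi has_real_derivative dpsi \<sigma>) (at \<sigma>)"
proof -
  have "(psi has_real_derivative inverse (f2 (psi \<sigma>))) (at \<sigma>)"
    by (rule DERIV_inverse_function[where a="\<sigma> - 1" and b="\<sigma> + 1" and f=f1])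
       (auto intro: d2 psi_cont simp: less_imp_neq[OF pos, symmetric])
  then show ?thesis by (simp add: dpsi_def inverse_eq_divide)
qed

lemma dpsi_pos: "dpsi \<sigma> > 0" unfolding dpsi_def using pos by simp

lemma dpsi_mono_pos: "0 \<le> a \<Longrightarrow> a \<le> b \<Longrightarrow> dpsi b \<le> dpsi a"
  unfolding dpsi_def using monop[of "psi a" "psi b"] psi_nonneg[of a] psi_le_iff[of a b] pos
  by (simp add: frac_le)

lemma dpsi_mono_neg: "a \<le> b \<Longrightarrow> b \<le> 0 \<Longrightarrow> dpsi a \<le> dpsi b"
  unfolding dpsi_def using monon[of "psi a" "psi b"] psi_nonpos[of b] psi_le_iff[of a b] pos
  by (simp add: frac_le)

lemma dpsi_le0: "dpsi a \<le> dpsi 0"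
  by (cases "0 \<le> a") (auto intro: dpsi_mono_pos dpsi_mono_neg)

lemma psi_ge_if_large: assumes "0 < T" "c2 * (1 + (2*T) powr p) / T \<le> \<sigma>" shows "T \<le> psi \<sigma>"
proof (rule ccontr)
  assume "\<not> T \<le> psi \<sigma>"
  then have "\<sigma> < f1 T" using f1_less_iff[of "psi \<sigma>" T] by simp
  obtain z where z: "T < z" "z < 2*T" "f (2*T) - f T = (2*T - T) * f1 z" 
    using MVT_everywhere[OF _ d1, of T "2*T"] assms by auto
  have "f1 T \<le> f1 z" using z f1_le_iff by simp
  then have m: "T * f1 T \<le> T * f1 z" using assms by (simp add: mult_left_mono)
  have "T * f1 T \<le> f (2*T)" using z(3) f_nonneg[of T] m by simp
  also have "\<dots> \<le> c2 * (1 + (2*T) powr p)" using growu[of "2*T"] assms by simp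
  finally have "f1 T \<le> c2 * (1 + (2*T) powr p) / T" using assms by (simp add: field_simps)
  then show False using \<open>\<sigma> < f1 T\<close> assms by simp
qed

lemma psi_le_if_small: assumes "0 < T" "\<sigma> \<le> - (c2 * (1 + (2*T) powr p) / T)" shows "psi \<sigma> \<le> -T"
proof (rule ccontr)
  assume "\<not> psi \<sigma> \<le> -T"
  then have "f1 (-T) < \<sigma>" using f1_less_iff[of "-T" "psi \<sigma>"] by simp
  obtain z where z: "-2*T < z" "z < -T" "f (-T) - f (-2*T) = (-T - -2*T) * f1 z" 
    using MVT_everywhere[OF _ d1, of "-2*T" "-T"] assms by auto
  have "f1 z \<le> f1 (-T)" using z f1_le_iff by simp
  then have m: "T * f1 z \<le> T * f1 (-T)" using assms by (simp add: mult_left_mono)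
  have "- T * f1 (-T) \<le> f (-2*T)" using z(3) f_nonneg[of "-T"] m by simp
  also have "\<dots> \<le> c2 * (1 + (2*T) powr p)" using growu[of "-2*T"] assms by simp
  finally have "- f1 (-T) \<le> c2 * (1 + (2*T) powr p) / T" using assms by (simp add: field_simps)
  then show False using \<open>f1 (-T) < \<sigma>\<close> assms by simp
qed

lemma psi_mvt:
  assumes "a < b"
  shows "\<exists>\<tau>. a < \<tau> \<and> \<tau> < b \<and> psi b - psi a = (b - a) * dpsi \<tau>"
  by (rule MVT_everywhere[OF assms psi_deriv])

definition "psi_quot \<sigma> h = (if h = 0 then dpsi \<sigma> else (psi (\<sigma> + h) - psi \<sigma>) / h)"

lemma psi_quot_mvt: "\<exists>\<tau>. min \<sigma> (\<sigma> + h) \<le> \<tau> \<and> \<tau> \<le> max \<sigma> (\<sigma> + h) \<and> psi_quot \<sigma> h = dpsi \<tau>"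
proof (cases h "0::real" rule: linorder_cases)
  case less
  obtain \<tau> where t: "\<sigma> + h < \<tau>" "\<tau> < \<sigma>" "psi \<sigma> - psi (\<sigma> + h) = (\<sigma> - (\<sigma> + h)) * dpsi \<tau>"
    using psi_mvt[of "\<sigma> + h" \<sigma>] less by auto
  then have "psi_quot \<sigma> h = dpsi \<tau>" using less unfolding psi_quot_def by (auto simp: field_simps)
  then show ?thesis using t less by (intro exI[of _ \<tau>]) auto
next
  case greater
  obtain \<tau> where t: "\<sigma> < \<tau>" "\<tau> < \<sigma> + h" "psi (\<sigma> + h) - psi \<sigma> = ((\<sigma> + h) - \<sigma>) * dpsi \<tau>"
    using psi_mvt[of \<sigma> "\<sigma> + h"] greater by auto
  then have "psi_quot \<sigma> h = dpsi \<tau>" using greater unfolding psi_quot_def by (auto simp: field_simps)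
  then show ?thesis using t greater by (intro exI[of _ \<tau>]) auto
qed (auto simp: psi_quot_def)

lemma psi_quot_pos: "0 < psi_quot \<sigma> h"
  using psi_quot_mvt[of \<sigma> h] dpsi_pos by auto

lemma psi_quot_cont: "isCont (psi_quot \<sigma>) 0"
proof -
  have "((\<lambda>h. (psi (\<sigma> + h) - psi \<sigma>) / h) \<longlongrightarrow> dpsi \<sigma>) (at 0)"
    using psi_deriv[of \<sigma>] by (simp add: DERIV_def)
  moreover have "\<forall>\<^sub>F h in at 0. (psi (\<sigma> + h) - psi \<sigma>) / h = psi_quot \<sigma> h"
    by (simp add: eventually_at_filter psi_quot_def)
  ultimately have "(psi_quot \<sigma> \<longlongrightarrow> dpsi \<sigma>) (at 0)" using tendsto_cong by fastforce
  then show ?thesis unfolding isCont_def by (simp add: psi_quot_def)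
qed

lemma psi_quot_0_le: "psi_quot 0 h \<le> dpsi 0"
  using psi_quot_mvt[of 0 h] dpsi_le0 by auto

text \<open>Since dpsi is monotone on each half line, difference quotients of psi near \<sigma> \<noteq> 0 are
  bounded by one fixed difference quotient; this dominates them uniformly in y and allows
  differentiating \<integral> \<psi>(y, \<sigma>) dy under the integral sign.\<close>

lemma psi_quot_le_pos:
  assumes "0 < \<sigma>" "\<bar>h\<bar> \<le> \<sigma> / 2"
  shows "psi_quot \<sigma> h \<le> 4 * (psi (\<sigma>/2) - psi (\<sigma>/4)) / \<sigma>"
proof -
  obtain \<tau> where t: "min \<sigma> (\<sigma> + h) \<le> \<tau>" "psi_quot \<sigma> h = dpsi \<tau>" using psi_quot_mvt by blast
  have t2: "\<sigma>/2 \<le> \<tau>" using t assms by auto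
  obtain \<tau>' where t': "\<sigma>/4 < \<tau>'" "\<tau>' < \<sigma>/2" "psi (\<sigma>/2) - psi (\<sigma>/4) = (\<sigma>/2 - \<sigma>/4) * dpsi \<tau>'"
    using psi_mvt[of "\<sigma>/4" "\<sigma>/2"] assms by auto
  have "dpsi \<tau> \<le> dpsi \<tau>'" using t' t2 assms by (intro dpsi_mono_pos) auto
  moreover have "4 * (psi (\<sigma>/2) - psi (\<sigma>/4)) / \<sigma> = dpsi \<tau>'" using t'(3) assms by (simp add: field_simps)
  ultimately show ?thesis using t by simp
qed

lemma psi_quot_le_neg:
  assumes "\<sigma> < 0" "\<bar>h\<bar> \<le> - \<sigma> / 2"
  shows "psi_quot \<sigma> h \<le> 4 * (psi (\<sigma>/4) - psi (\<sigma>/2)) / (- \<sigma>)"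
proof -
  obtain \<tau> where t: "\<tau> \<le> max \<sigma> (\<sigma> + h)" "psi_quot \<sigma> h = dpsi \<tau>" using psi_quot_mvt by blast
  have t2: "\<tau> \<le> \<sigma>/2" using t assms by auto
  obtain \<tau>' where t': "\<sigma>/2 < \<tau>'" "\<tau>' < \<sigma>/4" "psi (\<sigma>/4) - psi (\<sigma>/2) = (\<sigma>/4 - \<sigma>/2) * dpsi \<tau>'"
    using psi_mvt[of "\<sigma>/2" "\<sigma>/4"] assms by auto
  have "dpsi \<tau> \<le> dpsi \<tau>'" using t' t2 assms by (intro dpsi_mono_neg) auto
  moreover have "4 * (psi (\<sigma>/4) - psi (\<sigma>/2)) / (- \<sigma>) = dpsi \<tau>'" using t'(3) assms by (simp add: field_simps)
  ultimately show ?thesis using t by simp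
qed

end

lemma cell_energy_psi_le_pos:
  assumes f: "cell_energy f p a1 a2" and g: "cell_energy g p b1 b2"
    and le: "\<forall>r\<in>\<rat>. r * deriv f r \<le> r * deriv g r" and \<tau>: "0 \<le> \<tau>"
  shows "cell_energy.psi g \<tau> \<le> cell_energy.psi f \<tau>"
proof (rule ccontr)
  interpret f: cell_energy f p a1 a2 by (rule f)
  interpret g: cell_energy g p b1 b2 by (rule g)
  assume "\<not> g.psi \<tau> \<le> f.psi \<tau>"
  then obtain r where r: "r \<in> \<rat>" "f.psi \<tau> < r" "r < g.psi \<tau>"
    using Rats_dense_in_real[of "f.psi \<tau>" "g.psi \<tau>"] by auto
  have "0 < r" using r f.psi_nonneg[OF \<tau>] by linarith
  have "\<tau> < deriv f r" using f.f1_less[OF r(2)] by simp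
  moreover have "deriv g r < \<tau>" using g.f1_less[OF r(3)] by simp
  moreover have "r * deriv f r \<le> r * deriv g r" using le r(1) by blast
  then have "deriv f r \<le> deriv g r" using \<open>0 < r\<close> by simp
  ultimately show False by linarith
qed

lemma cell_energy_psi_le_neg:
  assumes f: "cell_energy f p a1 a2" and g: "cell_energy g p b1 b2"
    and le: "\<forall>r\<in>\<rat>. r * deriv f r \<le> r * deriv g r" and \<tau>: "\<tau> \<le> 0"
  shows "cell_energy.psi f \<tau> \<le> cell_energy.psi g \<tau>"
proof (rule ccontr)
  interpret f: cell_energy f p a1 a2 by (rule f)
  interpret g: cell_energy g p b1 b2 by (rule g)
  assume "\<not> f.psi \<tau> \<le> g.psi \<tau>"
  then obtain r where r: "r \<in> \<rat>" "g.psi \<tau> < r" "r < f.psi \<tau>"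
    using Rats_dense_in_real[of "g.psi \<tau>" "f.psi \<tau>"] by auto
  have "r < 0" using r f.psi_nonpos[OF \<tau>] by linarith
  have "deriv f r < \<tau>" using f.f1_less[OF r(3)] by simp
  moreover have "\<tau> < deriv g r" using g.f1_less[OF r(2)] by simp
  moreover have "r * deriv f r \<le> r * deriv g r" using le r(1) by blast
  then have "deriv g r \<le> deriv f r" using \<open>r < 0\<close> by (simp add: mult_le_cancel_left)
  ultimately show False by linarith
qed

section \<open>The one-dimensional cell problem\<close>

locale periodic_density =
  fixes p :: real and W :: "real \<Rightarrow> real \<Rightarrow> real" and c1 c2 :: real
  assumes p2: "2 \<le> p" and c1: "0 < c1"
    and measW: "\<And>\<xi>. (\<lambda>y. W y \<xi>) \<in> borel_measurable lborel"
    and d1: "\<And>y x. (W y has_real_derivative deriv (W y) x) (at x)"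
    and d2: "\<And>y x. (deriv (W y) has_real_derivative deriv (deriv (W y)) x) (at x)"
    and f2_cont: "\<And>y x. isCont (deriv (deriv (W y))) x"
    and growl: "\<And>y x. c1 * \<bar>x\<bar> powr p \<le> W y x"
    and growu: "\<And>y x. W y x \<le> c2 * (1 + \<bar>x\<bar> powr p)"
    and ae: "AE y in lborel. y \<in> {0<..<1} \<longrightarrow> (\<forall>\<xi>. deriv (deriv (W y)) \<xi> > 0) \<and>
           (\<forall>\<xi>. W y 0 \<le> W y \<xi>) \<and>
           (\<forall>a b. 0 \<le> a \<longrightarrow> a \<le> b \<longrightarrow> deriv (deriv (W y)) a \<le> deriv (deriv (W y)) b) \<and>
           (\<forall>a b. a \<le> b \<longrightarrow> b \<le> 0 \<longrightarrow> deriv (deriv (W y)) b \<le> deriv (deriv (W y)) a)"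
begin

lemma AE_cell_energy: "AE y in lborel. y \<in> {0<..<1} \<longrightarrow> cell_energy (W y) p c1 c2"
  using ae by eventually_elim (auto intro!: cell_energy.intro p2 c1 d1 d2 growl growu)

text \<open>The pointwise hypotheses hold only almost everywhere. We fix once and for all a null
  set outside of which they hold; psi_at and dpsi_at below are set to 0 on it, so
  that they are defined everywhere and measurable.\<close>

definition "bad_cells =
  (SOME N. N \<in> null_sets lborel \<and> {y \<in> {0<..<1}. \<not> cell_energy (W y) p c1 c2} \<subseteq> N)"

lemma bad_cells:
  "bad_cells \<in> null_sets lborel" "{y \<in> {0<..<1}. \<not> cell_energy (W y) p c1 c2} \<subseteq> bad_cells"
proof -
  from AE_cell_energy obtain N
    where "{y \<in> space lborel. \<not> (y \<in> {0<..<1} \<longrightarrow> cell_energy (W y) p c1 c2)} \<subseteq> N"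
      "emeasure lborel N = 0" "N \<in> sets lborel"
    by (rule AE_E)
  then have "\<exists>N. N \<in> null_sets lborel \<and> {y \<in> {0<..<1}. \<not> cell_energy (W y) p c1 c2} \<subseteq> N"
    by (auto simp: null_sets_def)
  from someI_ex[OF this] show "bad_cells \<in> null_sets lborel"
      "{y \<in> {0<..<1}. \<not> cell_energy (W y) p c1 c2} \<subseteq> bad_cells"
    unfolding bad_cells_def by blast+
qed

definition "good_cells = {0<..<1} - bad_cells"

lemma good_cells_sets[measurable]: "good_cells \<in> sets borel"
proof -
  have "bad_cells \<in> sets borel" using null_setsD2[OF bad_cells(1)] by simp
  then show ?thesis unfolding good_cells_def by (rule sets.Diff[rotated]) simp
qed

lemma cell_energy_at: "y \<in> good_cells \<Longrightarrow> cell_energy (W y) p c1 c2"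
  using bad_cells(2) unfolding good_cells_def by auto

lemma AE_good_cells: "AE y in unit_cell. y \<in> good_cells"
proof (rule AE_unit_cellI)
  show "AE y in lborel. y \<in> {0<..<1} \<longrightarrow> y \<in> good_cells"
    using AE_not_in[OF bad_cells(1)] by eventually_elim (simp add: good_cells_def)
qed

lemma borel_measurable_deriv_W: "(\<lambda>y. deriv (W y) t) \<in> borel_measurable lborel"
  by (rule borel_measurable_derivative[OF measW d1])

lemma borel_measurable_deriv2_W: "(\<lambda>y. deriv (deriv (W y)) t) \<in> borel_measurable lborel"
  by (rule borel_measurable_derivative[OF borel_measurable_deriv_W d2])

lemma isCont_W: "isCont (W y) x" using d1 DERIV_isCont by blast

lemma borel_measurable_W_comp: "u \<in> borel_measurable lborel \<Longrightarrow> (\<lambda>y. W y (u y)) \<in> borel_measurable lborel"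
  by (rule borel_measurable_caratheodory[OF measW isCont_W])

lemma borel_measurable_deriv2_W_comp: "u \<in> borel_measurable lborel \<Longrightarrow> (\<lambda>y. deriv (deriv (W y)) (u y)) \<in> borel_measurable lborel"
  by (rule borel_measurable_caratheodory[OF borel_measurable_deriv2_W f2_cont])

definition "psi_at y \<sigma> = (if y \<in> good_cells then recip_psi W y \<sigma> else 0)"

definition "dpsi_at y \<sigma> = (if y \<in> good_cells then 1 / deriv (deriv (W y)) (recip_psi W y \<sigma>) else 0)"

definition "psi_quot_at y \<sigma> h = (if h = 0 then dpsi_at y \<sigma> else (psi_at y (\<sigma> + h) - psi_at y \<sigma>) / h)"

definition "psi_bound \<sigma> = max 1 ((\<bar>\<sigma>\<bar> + c2) / c1)"

lemma recip_psi_eq: assumes "y \<in> good_cells" shows "recip_psi W y \<sigma> = cell_energy.psi (W y) \<sigma>"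
proof -
  interpret o: cell_energy "W y" p c1 c2 by (rule cell_energy_at[OF assms])
  show ?thesis unfolding recip_psi_def o.psi_def by (rule refl)
qed

lemma psi_at_good: "y \<in> good_cells \<Longrightarrow> psi_at y \<sigma> = cell_energy.psi (W y) \<sigma>"
  unfolding psi_at_def by (simp only: recip_psi_eq if_True)

lemma dpsi_at_good: "y \<in> good_cells \<Longrightarrow> dpsi_at y \<sigma> = cell_energy.dpsi (W y) \<sigma>"
proof -
  assume y: "y \<in> good_cells"
  interpret o: cell_energy "W y" p c1 c2 by (rule cell_energy_at[OF y])
  show ?thesis unfolding dpsi_at_def o.dpsi_def by (simp only: recip_psi_eq[OF y] y if_True)
qed

lemma psi_quot_at_good: "y \<in> good_cells \<Longrightarrow> psi_quot_at y \<sigma> h = cell_energy.psi_quot (W y) \<sigma> h"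
proof -
  assume y: "y \<in> good_cells"
  interpret o: cell_energy "W y" p c1 c2 by (rule cell_energy_at[OF y])
  show ?thesis unfolding psi_quot_at_def o.psi_quot_def by (simp only: psi_at_good[OF y] dpsi_at_good[OF y])
qed

lemma abs_psi_at_le: "\<bar>psi_at y \<sigma>\<bar> \<le> psi_bound \<sigma>"
proof (cases "y \<in> good_cells")
  case True
  interpret o: cell_energy "W y" p c1 c2 by (rule cell_energy_at[OF True])
  have "o.psi_bound \<sigma> = psi_bound \<sigma>" unfolding o.psi_bound_def psi_bound_def by (rule refl)
  moreover have "\<bar>psi_at y \<sigma>\<bar> = \<bar>o.psi \<sigma>\<bar>" by (simp only: psi_at_good[OF True])
  ultimately show ?thesis using o.abs_psi_le_bound[of \<sigma>] by linarith
qed (simp add: psi_at_def psi_bound_def)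

lemma psi_bound_mono: "\<bar>\<sigma>\<bar> \<le> \<bar>\<tau>\<bar> \<Longrightarrow> psi_bound \<sigma> \<le> psi_bound \<tau>"
proof -
  assume h: "\<bar>\<sigma>\<bar> \<le> \<bar>\<tau>\<bar>"
  have "(\<bar>\<sigma>\<bar> + c2) / c1 \<le> (\<bar>\<tau>\<bar> + c2) / c1" by (rule divide_right_mono) (use c1 h in auto)
  then show ?thesis unfolding psi_bound_def by (intro max.mono) auto
qed

lemma borel_measurable_psi_at[measurable]: "(\<lambda>y. psi_at y \<sigma>) \<in> borel_measurable lborel"
proof (rule borel_measurable_iff_le[THEN iffD2], intro allI)
  fix w
  have eq: "{y \<in> space lborel. psi_at y \<sigma> \<le> w} = (good_cells \<inter> {y \<in> space lborel. \<sigma> \<le> deriv (W y) w}) \<union> (- good_cells \<inter> {y. 0 \<le> w})"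
  proof (intro set_eqI iffI)
    fix y assume y: "y \<in> {y \<in> space lborel. psi_at y \<sigma> \<le> w}"
    show "y \<in> (good_cells \<inter> {y \<in> space lborel. \<sigma> \<le> deriv (W y) w}) \<union> (- good_cells \<inter> {y. 0 \<le> w})"
    proof (cases "y \<in> good_cells")
      case True
      interpret o: cell_energy "W y" p c1 c2 by (rule cell_energy_at[OF True])
      have "o.psi \<sigma> \<le> w" using y by (simp add: psi_at_good[OF True])
      then have "deriv (W y) (o.psi \<sigma>) \<le> deriv (W y) w" using o.f1_le_iff by blast
      then show ?thesis using True by simp
    qed (use y in \<open>auto simp: psi_at_def split: if_splits\<close>)
  next
    fix y assume y: "y \<in> (good_cells \<inter> {y \<in> space lborel. \<sigma> \<le> deriv (W y) w}) \<union> (- good_cells \<inter> {y. 0 \<le> w})"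
    show "y \<in> {y \<in> space lborel. psi_at y \<sigma> \<le> w}"
    proof (cases "y \<in> good_cells")
      case True
      interpret o: cell_energy "W y" p c1 c2 by (rule cell_energy_at[OF True])
      have "deriv (W y) (o.psi \<sigma>) \<le> deriv (W y) w" using y True by simp
      then have "o.psi \<sigma> \<le> w" using o.f1_le_iff by blast
      then show ?thesis using True by (simp add: psi_at_good[OF True])
    qed (use y in \<open>auto simp: psi_at_def split: if_splits\<close>)
  qed
  have m: "{y \<in> space lborel. \<sigma> \<le> deriv (W y) w} \<in> sets lborel"
    using borel_measurable_deriv_W[of w] by measurable
  show "{y \<in> space lborel. psi_at y \<sigma> \<le> w} \<in> sets lborel"
    unfolding eq using m by (auto intro!: sets.Un sets.Int sets.compl_sets)
qed

lemma borel_measurable_dpsi_at[measurable]: "(\<lambda>y. dpsi_at y \<sigma>) \<in> borel_measurable lborel"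
proof -
  have "(\<lambda>y. dpsi_at y \<sigma>) = (\<lambda>y. if y \<in> good_cells then 1 / deriv (deriv (W y)) (psi_at y \<sigma>) else 0)"
    by (auto simp: dpsi_at_def psi_at_def)
  moreover have "(\<lambda>y. deriv (deriv (W y)) (psi_at y \<sigma>)) \<in> borel_measurable lborel"
    by (rule borel_measurable_deriv2_W_comp) measurable
  moreover have "good_cells \<inter> space lborel \<in> sets lborel" by simp
  ultimately show ?thesis by (auto intro!: measurable_If_set borel_measurable_divide)
qed

lemma borel_measurable_psi_quot_at[measurable]: "(\<lambda>y. psi_quot_at y \<sigma> h) \<in> borel_measurable lborel"
  unfolding psi_quot_at_def by measurable

lemma integrable_psi_at: "integrable unit_cell (\<lambda>y. psi_at y \<sigma>)"
proof -
  interpret finite_measure unit_cell by (rule finite_measure_unit_cell)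
  show ?thesis by (rule integrable_const_bound[where B="psi_bound \<sigma>"]) (auto intro: abs_psi_at_le borel_measurable_unit_cell)
qed

definition "mean_psi \<sigma> = integral\<^sup>L unit_cell (\<lambda>y. psi_at y \<sigma>)"

lemma psi_at_bad: "y \<notin> good_cells \<Longrightarrow> psi_at y \<sigma> = 0" by (simp add: psi_at_def)

lemma dpsi_at_bad: "y \<notin> good_cells \<Longrightarrow> dpsi_at y \<sigma> = 0" by (simp add: dpsi_at_def)

lemma psi_at_0: "psi_at y 0 = 0"
proof (cases "y \<in> good_cells")
  case True
  interpret o: cell_energy "W y" p c1 c2 by (rule cell_energy_at[OF True])
  show ?thesis using o.psi_0 psi_at_good[OF True, of 0] by simp
qed (simp add: psi_at_def)

lemma mean_psi_0: "mean_psi 0 = 0" unfolding mean_psi_def psi_at_0 by simp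

lemma c2_nonneg: "0 \<le> c2"
proof -
  have "0 \<le> c1 * \<bar>0::real\<bar> powr p" using c1 by simp
  also have "\<dots> \<le> W 0 0" by (rule growl)
  also have "\<dots> \<le> c2 * (1 + \<bar>0::real\<bar> powr p)" by (rule growu)
  finally show ?thesis using p2 by simp
qed

lemma mean_psi_less: assumes "\<sigma> < \<tau>" shows "mean_psi \<sigma> < mean_psi \<tau>"
proof -
  interpret finite_measure unit_cell by (rule finite_measure_unit_cell)
  have "AE y in unit_cell. psi_at y \<sigma> < psi_at y \<tau>"
    using AE_good_cells
  proof eventually_elim
    case (elim y)
    interpret o: cell_energy "W y" p c1 c2 by (rule cell_energy_at[OF elim])
    have "o.psi \<sigma> < o.psi \<tau>" using o.psi_less_iff assms by simp
    then show ?case using psi_at_good[OF elim] by simp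
  qed
  moreover have "emeasure unit_cell (space unit_cell) \<noteq> 0" using measure_space_unit_cell by (simp add: emeasure_eq_measure)
  ultimately show ?thesis unfolding mean_psi_def by (intro integral_less_AE_space integrable_psi_at)
qed

lemma strict_mono_mean_psi: "strict_mono mean_psi"
  by (rule strict_monoI) (rule mean_psi_less)

lemma mean_psi_le_iff: "mean_psi \<sigma> \<le> mean_psi \<tau> \<longleftrightarrow> \<sigma> \<le> \<tau>"
  by (rule strict_mono_less_eq[OF strict_mono_mean_psi])

lemma isCont_mean_psi: "isCont mean_psi \<sigma>"
proof -
  interpret finite_measure unit_cell by (rule finite_measure_unit_cell)
  have "isCont (\<lambda>h. integral\<^sup>L unit_cell (\<lambda>y. psi_at y h)) \<sigma>"
  proof (rule integral_isCont_dominated[where g="\<lambda>y. psi_bound (\<bar>\<sigma>\<bar> + 1)" and r=1])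
    show "\<And>h. (\<lambda>y. psi_at y h) \<in> borel_measurable unit_cell" by (rule borel_measurable_unit_cell) (rule borel_measurable_psi_at)
    show "integrable unit_cell (\<lambda>y. psi_bound (\<bar>\<sigma>\<bar> + 1))" by (rule integrable_const_bound[where B="\<bar>psi_bound (\<bar>\<sigma>\<bar> + 1)\<bar>"]) auto
    show "AE y in unit_cell. \<forall>h. \<bar>h - \<sigma>\<bar> < 1 \<longrightarrow> \<bar>psi_at y h\<bar> \<le> psi_bound (\<bar>\<sigma>\<bar> + 1)"
    proof (intro AE_I2 allI impI)
      fix y h assume "\<bar>h - \<sigma>\<bar> < 1"
      then have "\<bar>h\<bar> \<le> \<bar>\<bar>\<sigma>\<bar> + 1\<bar>" by linarith
      then show "\<bar>psi_at y h\<bar> \<le> psi_bound (\<bar>\<sigma>\<bar> + 1)" using abs_psi_at_le[of y h] psi_bound_mono[of h "\<bar>\<sigma>\<bar> + 1"] by linarith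
    qed
    show "AE y in unit_cell. isCont (\<lambda>h. psi_at y h) \<sigma>"
      using AE_good_cells
    proof eventually_elim
      case (elim y)
      interpret o: cell_energy "W y" p c1 c2 by (rule cell_energy_at[OF elim])
      have "(\<lambda>h. psi_at y h) = o.psi" using psi_at_good[OF elim] by (intro ext) simp
      then show ?case using o.psi_cont by simp
    qed
  qed simp
  then show ?thesis unfolding mean_psi_def .
qed

definition "psi_threshold T = c2 * (1 + (2*T) powr p) / T"

lemma mean_psi_threshold_ge: assumes "0 < T" shows "T \<le> mean_psi (psi_threshold T)"
proof -
  interpret finite_measure unit_cell by (rule finite_measure_unit_cell)
  have "AE y in unit_cell. T \<le> psi_at y (psi_threshold T)"
    using AE_good_cells
  proof eventually_elim
    case (elim y)
    interpret o: cell_energy "W y" p c1 c2 by (rule cell_energy_at[OF elim])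
    have "T \<le> o.psi (psi_threshold T)" by (rule o.psi_ge_if_large[OF assms]) (simp add: psi_threshold_def)
    then show ?case using psi_at_good[OF elim] by simp
  qed
  then have "integral\<^sup>L unit_cell (\<lambda>y. T) \<le> integral\<^sup>L unit_cell (\<lambda>y. psi_at y (psi_threshold T))"
    by (intro integral_mono_AE integrable_psi_at) auto
  then show ?thesis unfolding mean_psi_def using measure_space_unit_cell by simp
qed

lemma mean_psi_neg_threshold_le: assumes "0 < T" shows "mean_psi (- psi_threshold T) \<le> - T"
proof -
  interpret finite_measure unit_cell by (rule finite_measure_unit_cell)
  have "AE y in unit_cell. psi_at y (- psi_threshold T) \<le> - T"
    using AE_good_cells
  proof eventually_elim
    case (elim y)
    interpret o: cell_energy "W y" p c1 c2 by (rule cell_energy_at[OF elim])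
    have "o.psi (- psi_threshold T) \<le> - T" by (rule o.psi_le_if_small[OF assms]) (simp add: psi_threshold_def)
    then show ?case using psi_at_good[OF elim] by simp
  qed
  then have "integral\<^sup>L unit_cell (\<lambda>y. psi_at y (- psi_threshold T)) \<le> integral\<^sup>L unit_cell (\<lambda>y. - T)"
    by (intro integral_mono_AE integrable_psi_at) auto
  then show ?thesis unfolding mean_psi_def using measure_space_unit_cell by simp
qed

lemma mean_psi_surj: "\<exists>\<sigma>. mean_psi \<sigma> = \<xi>"
proof -
  define T where "T = \<bar>\<xi>\<bar> + 1"
  have T: "0 < T" unfolding T_def by simp
  have l: "mean_psi (- psi_threshold T) \<le> \<xi>" "\<xi> \<le> mean_psi (psi_threshold T)" 
    using mean_psi_threshold_ge[OF T] mean_psi_neg_threshold_le[OF T] unfolding T_def by linarith+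
  have b: "- psi_threshold T \<le> psi_threshold T" using T c2_nonneg unfolding psi_threshold_def by simp
  have c: "continuous_on {- psi_threshold T .. psi_threshold T} mean_psi" using isCont_mean_psi by (simp add: continuous_at_imp_continuous_on)
  show ?thesis using IVT'[OF l b c] by blast
qed

text \<open>The stress \<sigma>(\<xi>) of the paper: the corrector for the strain \<xi> has gradient
  \<xi> + w' = \<psi>(_, \<sigma>(\<xi>)).\<close>

definition "stress \<xi> = (THE \<sigma>. mean_psi \<sigma> = \<xi>)"

lemma mean_psi_inj: "mean_psi a = mean_psi b \<Longrightarrow> a = b"
  by (simp add: order_eq_iff mean_psi_le_iff)

lemma mean_psi_stress: "mean_psi (stress \<xi>) = \<xi>"
proof -
  obtain \<sigma> where s: "mean_psi \<sigma> = \<xi>" using mean_psi_surj by blast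
  have "\<exists>!\<sigma>. mean_psi \<sigma> = \<xi>" using s mean_psi_inj by (intro ex1I[of _ \<sigma>]) auto
  then show ?thesis unfolding stress_def by (rule theI')
qed

lemma stress_mean_psi: "stress (mean_psi \<sigma>) = \<sigma>"
  using mean_psi_stress[of "mean_psi \<sigma>"] mean_psi_inj by simp

lemma isCont_stress: "isCont stress \<xi>"
proof -
  have "isCont stress (mean_psi (stress \<xi>))"
    by (rule isCont_inverse_function[where d=1]) (auto simp: stress_mean_psi intro: isCont_mean_psi)
  then show ?thesis by (simp add: mean_psi_stress)
qed

lemma stress_0: "stress 0 = 0" using stress_mean_psi[of 0] mean_psi_0 by simp

lemma stress_pos: "0 < \<xi> \<Longrightarrow> 0 < stress \<xi>"
  by (metis mean_psi_0 mean_psi_stress mean_psi_le_iff linorder_not_le)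

lemma stress_neg: "\<xi> < 0 \<Longrightarrow> stress \<xi> < 0"
  by (metis mean_psi_0 mean_psi_stress mean_psi_le_iff linorder_not_le)

lemma W_nonneg: "0 \<le> W y x"
proof -
  have "0 \<le> c1 * \<bar>x\<bar> powr p" using c1 by simp
  moreover have "c1 * \<bar>x\<bar> powr p \<le> W y x" by (rule growl)
  ultimately show ?thesis by linarith
qed

definition "psi_energy \<sigma> = integral\<^sup>L unit_cell (\<lambda>y. W y (psi_at y \<sigma>))"

text \<open>By the tangent inequality these affine functions of \<xi> lie below W*; the one
  with \<sigma> = stress \<xi> touches it at \<xi>.\<close>

definition "affine_minorant \<sigma> \<xi> = psi_energy \<sigma> + \<sigma> * (\<xi> - mean_psi \<sigma>)"

lemma borel_measurable_W_psi_at: "(\<lambda>y. W y (psi_at y \<sigma>)) \<in> borel_measurable lborel"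
  by (rule borel_measurable_W_comp) (rule borel_measurable_psi_at)

lemma integrable_W_psi_at: "integrable unit_cell (\<lambda>y. W y (psi_at y \<sigma>))"
proof -
  interpret finite_measure unit_cell by (rule finite_measure_unit_cell)
  show ?thesis
  proof (rule integrable_const_bound[where B="c2 * (1 + psi_bound \<sigma> powr p)"])
    show "AE y in unit_cell. norm (W y (psi_at y \<sigma>)) \<le> c2 * (1 + psi_bound \<sigma> powr p)"
    proof (intro AE_I2)
      fix y
      have "\<bar>psi_at y \<sigma>\<bar> powr p \<le> psi_bound \<sigma> powr p" using abs_psi_at_le[of y \<sigma>] p2 by (intro powr_mono2) auto
      then have "c2 * (1 + \<bar>psi_at y \<sigma>\<bar> powr p) \<le> c2 * (1 + psi_bound \<sigma> powr p)"
        using c2_nonneg by (intro mult_left_mono) auto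
      moreover have "W y (psi_at y \<sigma>) \<le> c2 * (1 + \<bar>psi_at y \<sigma>\<bar> powr p)" by (rule growu)
      ultimately show "norm (W y (psi_at y \<sigma>)) \<le> c2 * (1 + psi_bound \<sigma> powr p)"
        using W_nonneg[of y "psi_at y \<sigma>"] by simp
    qed
    show "(\<lambda>y. W y (psi_at y \<sigma>)) \<in> borel_measurable unit_cell" by (rule borel_measurable_unit_cell) (rule borel_measurable_W_psi_at)
  qed
qed

lemma integrable_W_shift:
  assumes "W1p_per p w w'"
  shows "integrable unit_cell (\<lambda>y. W y (\<xi> + w' y))"
proof (rule Bochner_Integration.integrable_bound)
  interpret finite_measure unit_cell by (rule finite_measure_unit_cell)
  have w': "w' \<in> borel_measurable lborel" using assms unfolding W1p_per_def by blast
  show "(\<lambda>y. W y (\<xi> + w' y)) \<in> borel_measurable unit_cell"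
    by (rule borel_measurable_unit_cell, rule borel_measurable_W_comp) (use w' in measurable)
  show "integrable unit_cell (\<lambda>y. c2 * (1 + 2 powr p * (\<bar>\<xi>\<bar> powr p + \<bar>w' y\<bar> powr p)))"
    using W1p_per_integrable(2)[OF assms]
    by (auto intro!: integrable_mult_right Bochner_Integration.integrable_add)
  show "AE y in unit_cell. norm (W y (\<xi> + w' y)) \<le> norm (c2 * (1 + 2 powr p * (\<bar>\<xi>\<bar> powr p + \<bar>w' y\<bar> powr p)))"
  proof (intro AE_I2)
    fix y
    have "\<bar>\<xi> + w' y\<bar> powr p \<le> 2 powr p * (\<bar>\<xi>\<bar> powr p + \<bar>w' y\<bar> powr p)"
      using p2 by (intro abs_add_powr_le) simp
    then have "c2 * (1 + \<bar>\<xi> + w' y\<bar> powr p) \<le> c2 * (1 + 2 powr p * (\<bar>\<xi>\<bar> powr p + \<bar>w' y\<bar> powr p))"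
      using c2_nonneg by (intro mult_left_mono) auto
    then show "norm (W y (\<xi> + w' y)) \<le> norm (c2 * (1 + 2 powr p * (\<bar>\<xi>\<bar> powr p + \<bar>w' y\<bar> powr p)))"
      using growu[of y "\<xi> + w' y"] W_nonneg[of y "\<xi> + w' y"] by simp
  qed
qed

lemma affine_minorant_le_energy:
  assumes w: "W1p_per p w w'"
  shows "affine_minorant \<sigma> \<xi> \<le> (LBINT y=0..1. W y (\<xi> + w' y))"
proof -
  interpret finite_measure unit_cell by (rule finite_measure_unit_cell)
  note int_w' = W1p_per_integrable(1)[OF w] and mean_w' = W1p_per_integrable(3)[OF w]
  note int_W = integrable_W_shift[OF w]
  have pt: "AE y in unit_cell. W y (psi_at y \<sigma>) + (\<sigma> * \<xi> + \<sigma> * w' y - \<sigma> * psi_at y \<sigma>) \<le> W y (\<xi> + w' y)"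
    using AE_good_cells
  proof eventually_elim
    case (elim y)
    interpret o: cell_energy "W y" p c1 c2 by (rule cell_energy_at[OF elim])
    have "W y (o.psi \<sigma>) + deriv (W y) (o.psi \<sigma>) * ((\<xi> + w' y) - o.psi \<sigma>) \<le> W y (\<xi> + w' y)"
      by (rule o.tangent_le)
    then show ?case using psi_at_good[OF elim, of \<sigma>] by (simp add: algebra_simps)
  qed
  have int_affine: "integrable unit_cell (\<lambda>y. \<sigma> * \<xi> + \<sigma> * w' y - \<sigma> * psi_at y \<sigma>)"
    using int_w' integrable_psi_at by (auto intro!: Bochner_Integration.integrable_diff Bochner_Integration.integrable_add integrable_mult_right)
  have "integral\<^sup>L unit_cell (\<lambda>y. W y (psi_at y \<sigma>) + (\<sigma> * \<xi> + \<sigma> * w' y - \<sigma> * psi_at y \<sigma>)) \<le> integral\<^sup>L unit_cell (\<lambda>y. W y (\<xi> + w' y))"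
    by (rule integral_mono_AE[OF Bochner_Integration.integrable_add[OF integrable_W_psi_at int_affine] int_W pt])
  moreover have "integral\<^sup>L unit_cell (\<lambda>y. W y (psi_at y \<sigma>) + (\<sigma> * \<xi> + \<sigma> * w' y - \<sigma> * psi_at y \<sigma>)) = affine_minorant \<sigma> \<xi>"
  proof -
    have "integral\<^sup>L unit_cell (\<lambda>y. W y (psi_at y \<sigma>) + (\<sigma> * \<xi> + \<sigma> * w' y - \<sigma> * psi_at y \<sigma>)) =
       psi_energy \<sigma> + integral\<^sup>L unit_cell (\<lambda>y. \<sigma> * \<xi> + \<sigma> * w' y - \<sigma> * psi_at y \<sigma>)"
      unfolding psi_energy_def by (rule Bochner_Integration.integral_add[OF integrable_W_psi_at int_affine])
    also have "integral\<^sup>L unit_cell (\<lambda>y. \<sigma> * \<xi> + \<sigma> * w' y - \<sigma> * psi_at y \<sigma>) = 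
       integral\<^sup>L unit_cell (\<lambda>y. \<sigma> * \<xi> + \<sigma> * w' y) - integral\<^sup>L unit_cell (\<lambda>y. \<sigma> * psi_at y \<sigma>)"
      by (rule Bochner_Integration.integral_diff) (use int_w' integrable_psi_at in \<open>auto intro!: Bochner_Integration.integrable_add integrable_mult_right\<close>)
    also have "integral\<^sup>L unit_cell (\<lambda>y. \<sigma> * \<xi> + \<sigma> * w' y) = integral\<^sup>L unit_cell (\<lambda>y. \<sigma> * \<xi>) + integral\<^sup>L unit_cell (\<lambda>y. \<sigma> * w' y)"
      by (rule Bochner_Integration.integral_add) (use int_w' in \<open>auto intro!: integrable_mult_right\<close>)
    also have "integral\<^sup>L unit_cell (\<lambda>y. \<sigma> * \<xi>) = \<sigma> * \<xi>" using measure_space_unit_cell by simp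
    also have "integral\<^sup>L unit_cell (\<lambda>y. \<sigma> * w' y) = 0" using mean_w' by simp
    also have "integral\<^sup>L unit_cell (\<lambda>y. \<sigma> * psi_at y \<sigma>) = \<sigma> * mean_psi \<sigma>" unfolding mean_psi_def by simp
    finally show ?thesis unfolding affine_minorant_def by (simp add: algebra_simps)
  qed
  ultimately show ?thesis by (simp add: LBINT_01_eq_unit_cell)
qed

lemma psi_energy_attained:
  assumes "mean_psi \<sigma> = \<xi>"
  shows "\<exists>w w'. W1p_per p w w' \<and> (LBINT y=0..1. w y) = 0 \<and> (LBINT y=0..1. W y (\<xi> + w' y)) = psi_energy \<sigma>"
proof -
  interpret finite_measure unit_cell by (rule finite_measure_unit_cell)
  define v where "v y = psi_at (frac y) \<sigma> - \<xi>" for y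
  have "(\<lambda>z. psi_at z \<sigma>) \<in> borel_measurable borel"
    using borel_measurable_psi_at[of \<sigma>] by (simp add: measurable_lborel1)
  from measurable_compose[OF borel_measurable_frac this] have "v \<in> borel_measurable borel"
    unfolding v_def by measurable
  then have v: "v \<in> borel_measurable lborel" by (simp add: measurable_lborel1)
  have bound: "\<bar>v y\<bar> \<le> psi_bound \<sigma> + \<bar>\<xi>\<bar>" for y
    using abs_psi_at_le[of "frac y" \<sigma>] unfolding v_def by linarith
  have per: "v (x + of_int n) = v x" for x n by (simp add: v_def)
  have v_cell: "AE y in unit_cell. v y = psi_at y \<sigma> - \<xi>"
    using AE_unit_cell_frac[of "\<lambda>y. psi_at y \<sigma>"] by (simp add: v_def)
  have "integral\<^sup>L unit_cell v = integral\<^sup>L unit_cell (\<lambda>y. psi_at y \<sigma> - \<xi>)"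
    by (rule integral_cong_AE) (use v_cell v in \<open>auto intro: borel_measurable_unit_cell\<close>)
  also have "\<dots> = mean_psi \<sigma> - \<xi>" unfolding mean_psi_def
    using integrable_psi_at measure_space_unit_cell by (simp add: Bochner_Integration.integral_diff)
  finally have "(LBINT t=0..1. v t) = 0" using assms by (simp add: LBINT_01_eq_unit_cell)
  then obtain w where "W1p_per p w v" "(LBINT y=0..1. w y) = 0"
    using W1p_per_primitive[OF v bound per _ order_trans[OF zero_le_numeral p2]] by blast
  moreover have "(LBINT y=0..1. W y (\<xi> + v y)) = psi_energy \<sigma>"
    unfolding LBINT_01_eq_unit_cell psi_energy_def
  proof (rule integral_cong_AE)
    show "(\<lambda>y. W y (\<xi> + v y)) \<in> borel_measurable unit_cell"
      by (rule borel_measurable_unit_cell, rule borel_measurable_W_comp) (use v in measurable)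
    show "(\<lambda>y. W y (psi_at y \<sigma>)) \<in> borel_measurable unit_cell"
      by (rule borel_measurable_unit_cell, rule borel_measurable_W_psi_at)
    show "AE y in unit_cell. W y (\<xi> + v y) = W y (psi_at y \<sigma>)" using v_cell by eventually_elim simp
  qed
  ultimately show ?thesis by blast
qed

definition "cell_energies \<xi> = {(LBINT y=0..1. W y (\<xi> + w' y)) | w w'. W1p_per p w w' \<and> (LBINT y=0..1. w y) = 0}"

lemma Wstar_eq_Inf: "Wstar p W \<xi> = Inf (cell_energies \<xi>)"
  unfolding Wstar_def cell_energies_def by (rule refl)

lemma psi_energy_mem: "psi_energy (stress \<xi>) \<in> cell_energies \<xi>"
proof -
  obtain w w' where a: "W1p_per p w w'" "(LBINT y=0..1. w y) = 0" "(LBINT y=0..1. W y (\<xi> + w' y)) = psi_energy (stress \<xi>)"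
    using psi_energy_attained[OF mean_psi_stress[of \<xi>]] by blast
  show ?thesis unfolding cell_energies_def
    by (rule CollectI, rule exI[of _ w], rule exI[of _ w']) (simp add: a)
qed

lemma affine_minorant_le_mem: "x \<in> cell_energies \<xi> \<Longrightarrow> affine_minorant \<sigma> \<xi> \<le> x"
  unfolding cell_energies_def using affine_minorant_le_energy by blast

lemma affine_minorant_le_Wstar: "affine_minorant \<sigma> \<xi> \<le> Wstar p W \<xi>"
  unfolding Wstar_eq_Inf by (rule cInf_greatest) (use psi_energy_mem affine_minorant_le_mem in blast)+

lemma Wstar_eq_affine_minorant: "Wstar p W \<xi> = affine_minorant (stress \<xi>) \<xi>"
proof (rule antisym)
  have "Inf (cell_energies \<xi>) \<le> psi_energy (stress \<xi>)"
    by (rule cInf_lower[OF psi_energy_mem]) (unfold bdd_below_def, use affine_minorant_le_mem in blast)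
  then show "Wstar p W \<xi> \<le> affine_minorant (stress \<xi>) \<xi>" unfolding Wstar_eq_Inf affine_minorant_def by (simp add: mean_psi_stress)
  show "affine_minorant (stress \<xi>) \<xi> \<le> Wstar p W \<xi>" by (rule affine_minorant_le_Wstar)
qed

lemma Wstar_has_derivative: "(Wstar p W has_real_derivative stress \<xi>) (at \<xi>)"
proof (rule has_real_derivative_if_supporting_slopes[OF _ _ isCont_stress])
  show "stress \<xi> * (\<eta> - \<xi>) \<le> Wstar p W \<eta> - Wstar p W \<xi>" for \<eta>
    using affine_minorant_le_Wstar[of "stress \<xi>" \<eta>] Wstar_eq_affine_minorant[of \<xi>]
    unfolding affine_minorant_def by (simp add: algebra_simps)
  show "Wstar p W \<eta> - Wstar p W \<xi> \<le> stress \<eta> * (\<eta> - \<xi>)" for \<eta>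
    using affine_minorant_le_Wstar[of "stress \<eta>" \<xi>] Wstar_eq_affine_minorant[of \<eta>]
    unfolding affine_minorant_def by (simp add: algebra_simps)
qed

lemma psi_quot_at_bad: "y \<notin> good_cells \<Longrightarrow> psi_quot_at y \<sigma> h = 0" by (simp add: psi_quot_at_def psi_at_def dpsi_at_def)

lemma psi_quot_at_nonneg: "0 \<le> psi_quot_at y \<sigma> h"
proof (cases "y \<in> good_cells")
  case True
  interpret o: cell_energy "W y" p c1 c2 by (rule cell_energy_at[OF True])
  show ?thesis using o.psi_quot_pos[of \<sigma> h] psi_quot_at_good[OF True, of \<sigma> h] by simp
qed (simp add: psi_quot_at_bad)

lemma psi_quot_at_0: "psi_quot_at y \<sigma> 0 = dpsi_at y \<sigma>" by (simp add: psi_quot_at_def)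

lemma mean_psi_quot_eq: assumes "h \<noteq> 0" shows "(mean_psi (\<sigma> + h) - mean_psi \<sigma>) / h = integral\<^sup>L unit_cell (\<lambda>y. psi_quot_at y \<sigma> h)"
proof -
  have "integral\<^sup>L unit_cell (\<lambda>y. psi_quot_at y \<sigma> h) = integral\<^sup>L unit_cell (\<lambda>y. (psi_at y (\<sigma> + h) - psi_at y \<sigma>) / h)"
    using assms by (simp add: psi_quot_at_def)
  also have "\<dots> = integral\<^sup>L unit_cell (\<lambda>y. psi_at y (\<sigma> + h) - psi_at y \<sigma>) / h" by simp
  also have "integral\<^sup>L unit_cell (\<lambda>y. psi_at y (\<sigma> + h) - psi_at y \<sigma>) = mean_psi (\<sigma> + h) - mean_psi \<sigma>"
    unfolding mean_psi_def by (rule Bochner_Integration.integral_diff[OF integrable_psi_at integrable_psi_at])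
  finally show ?thesis by simp
qed

lemma isCont_psi_quot_at: "AE y in unit_cell. isCont (\<lambda>h. psi_quot_at y \<sigma> h) 0"
  using AE_good_cells
proof eventually_elim
  case (elim y)
  interpret o: cell_energy "W y" p c1 c2 by (rule cell_energy_at[OF elim])
  have "(\<lambda>h. psi_quot_at y \<sigma> h) = o.psi_quot \<sigma>" using psi_quot_at_good[OF elim] by (intro ext) simp
  then show ?case using o.psi_quot_cont by simp
qed

lemma borel_measurable_psi_quot_at_cell: "(\<lambda>y. psi_quot_at y \<sigma> h) \<in> borel_measurable unit_cell" by (rule borel_measurable_unit_cell) (rule borel_measurable_psi_quot_at)

lemma mean_psi_has_derivative_dominated:
  assumes gi: "integrable unit_cell g" and r: "0 < r"
    and dom: "AE y in unit_cell. \<forall>h. \<bar>h - 0\<bar> < r \<longrightarrow> \<bar>psi_quot_at y \<sigma> h\<bar> \<le> g y"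
  shows "integrable unit_cell (\<lambda>y. dpsi_at y \<sigma>)" "(mean_psi has_real_derivative integral\<^sup>L unit_cell (\<lambda>y. dpsi_at y \<sigma>)) (at \<sigma>)"
proof -
  have c: "isCont (\<lambda>h. integral\<^sup>L unit_cell (\<lambda>y. psi_quot_at y \<sigma> h)) 0"
    by (rule integral_isCont_dominated[OF borel_measurable_psi_quot_at_cell gi r dom isCont_psi_quot_at])
  show "integrable unit_cell (\<lambda>y. dpsi_at y \<sigma>)"
  proof (rule Bochner_Integration.integrable_bound[OF gi])
    show "(\<lambda>y. dpsi_at y \<sigma>) \<in> borel_measurable unit_cell" by (rule borel_measurable_unit_cell) (rule borel_measurable_dpsi_at)
    show "AE y in unit_cell. norm (dpsi_at y \<sigma>) \<le> norm (g y)"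
      using dom by eventually_elim (use r in \<open>auto simp: psi_quot_at_0[symmetric] intro: order_trans[OF _ abs_ge_self]\<close>)
  qed
  have "((\<lambda>h. integral\<^sup>L unit_cell (\<lambda>y. psi_quot_at y \<sigma> h)) \<longlongrightarrow> integral\<^sup>L unit_cell (\<lambda>y. dpsi_at y \<sigma>)) (at 0)"
    using c unfolding isCont_def by (simp add: psi_quot_at_0)
  moreover have "\<forall>\<^sub>F h in at 0. integral\<^sup>L unit_cell (\<lambda>y. psi_quot_at y \<sigma> h) = (mean_psi (\<sigma> + h) - mean_psi \<sigma>) / h"
    unfolding eventually_at_filter by (rule always_eventually) (auto simp: mean_psi_quot_eq)
  ultimately have "((\<lambda>h. (mean_psi (\<sigma> + h) - mean_psi \<sigma>) / h) \<longlongrightarrow> integral\<^sup>L unit_cell (\<lambda>y. dpsi_at y \<sigma>)) (at 0)"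
    using tendsto_cong by fastforce
  then show "(mean_psi has_real_derivative integral\<^sup>L unit_cell (\<lambda>y. dpsi_at y \<sigma>)) (at \<sigma>)"
    by (simp add: DERIV_def)
qed

lemma mean_psi_has_derivative_pos:
  assumes "0 < \<sigma>"
  shows "integrable unit_cell (\<lambda>y. dpsi_at y \<sigma>)" "(mean_psi has_real_derivative integral\<^sup>L unit_cell (\<lambda>y. dpsi_at y \<sigma>)) (at \<sigma>)"
proof -
  define g where "g y = 4 * (psi_at y (\<sigma>/2) - psi_at y (\<sigma>/4)) / \<sigma>" for y
  have gi: "integrable unit_cell g" unfolding g_def
    by (intro integrable_divide integrable_mult_right Bochner_Integration.integrable_diff integrable_psi_at)
  have b: "AE y in unit_cell. \<forall>h. \<bar>h - 0\<bar> < \<sigma>/2 \<longrightarrow> \<bar>psi_quot_at y \<sigma> h\<bar> \<le> g y"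
  proof (rule AE_I2, intro allI impI)
    fix y h assume h: "\<bar>h - 0\<bar> < \<sigma>/2"
    show "\<bar>psi_quot_at y \<sigma> h\<bar> \<le> g y"
    proof (cases "y \<in> good_cells")
      case True
      interpret o: cell_energy "W y" p c1 c2 by (rule cell_energy_at[OF True])
      have "o.psi_quot \<sigma> h \<le> 4 * (o.psi (\<sigma>/2) - o.psi (\<sigma>/4)) / \<sigma>" using h assms by (intro o.psi_quot_le_pos) auto
      then show ?thesis using psi_quot_at_nonneg[of y \<sigma> h] unfolding g_def psi_quot_at_good[OF True] psi_at_good[OF True] by simp
    qed (simp add: g_def psi_quot_at_bad psi_at_bad)
  qed
  show "integrable unit_cell (\<lambda>y. dpsi_at y \<sigma>)" "(mean_psi has_real_derivative integral\<^sup>L unit_cell (\<lambda>y. dpsi_at y \<sigma>)) (at \<sigma>)"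
    using mean_psi_has_derivative_dominated[OF gi _ b] assms by simp_all
qed

lemma mean_psi_has_derivative_neg:
  assumes "\<sigma> < 0"
  shows "integrable unit_cell (\<lambda>y. dpsi_at y \<sigma>)" "(mean_psi has_real_derivative integral\<^sup>L unit_cell (\<lambda>y. dpsi_at y \<sigma>)) (at \<sigma>)"
proof -
  define g where "g y = 4 * (psi_at y (\<sigma>/4) - psi_at y (\<sigma>/2)) / (- \<sigma>)" for y
  have gi: "integrable unit_cell g" unfolding g_def
    by (intro integrable_divide integrable_mult_right Bochner_Integration.integrable_diff integrable_psi_at)
  have b: "AE y in unit_cell. \<forall>h. \<bar>h - 0\<bar> < - \<sigma>/2 \<longrightarrow> \<bar>psi_quot_at y \<sigma> h\<bar> \<le> g y"
  proof (rule AE_I2, intro allI impI)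
    fix y h assume h: "\<bar>h - 0\<bar> < - \<sigma>/2"
    show "\<bar>psi_quot_at y \<sigma> h\<bar> \<le> g y"
    proof (cases "y \<in> good_cells")
      case True
      interpret o: cell_energy "W y" p c1 c2 by (rule cell_energy_at[OF True])
      have "o.psi_quot \<sigma> h \<le> 4 * (o.psi (\<sigma>/4) - o.psi (\<sigma>/2)) / (- \<sigma>)" using h assms by (intro o.psi_quot_le_neg) auto
      then show ?thesis using psi_quot_at_nonneg[of y \<sigma> h] unfolding g_def psi_quot_at_good[OF True] psi_at_good[OF True] by simp
    qed (simp add: g_def psi_quot_at_bad psi_at_bad)
  qed
  show "integrable unit_cell (\<lambda>y. dpsi_at y \<sigma>)" "(mean_psi has_real_derivative integral\<^sup>L unit_cell (\<lambda>y. dpsi_at y \<sigma>)) (at \<sigma>)"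
    using mean_psi_has_derivative_dominated[OF gi _ b] assms by simp_all
qed

lemma mean_psi_has_derivative_nonzero:
  assumes "\<sigma> \<noteq> 0"
  shows "integrable unit_cell (\<lambda>y. dpsi_at y \<sigma>)" "(mean_psi has_real_derivative integral\<^sup>L unit_cell (\<lambda>y. dpsi_at y \<sigma>)) (at \<sigma>)"
  using mean_psi_has_derivative_pos[of \<sigma>] mean_psi_has_derivative_neg[of \<sigma>] assms by (cases "0 < \<sigma>"; simp)+

lemma psi_quot_at_0_le: "psi_quot_at y 0 h \<le> dpsi_at y 0"
proof (cases "y \<in> good_cells")
  case True
  interpret o: cell_energy "W y" p c1 c2 by (rule cell_energy_at[OF True])
  show ?thesis using o.psi_quot_0_le[of h] unfolding psi_quot_at_good[OF True] dpsi_at_good[OF True] .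
qed (simp add: psi_quot_at_bad dpsi_at_bad)

lemma mean_psi_has_derivative_0:
  assumes gi: "integrable unit_cell (\<lambda>y. dpsi_at y 0)"
  shows "(mean_psi has_real_derivative integral\<^sup>L unit_cell (\<lambda>y. dpsi_at y 0)) (at 0)"
proof -
  have b: "AE y in unit_cell. \<forall>h. \<bar>h - 0\<bar> < 1 \<longrightarrow> \<bar>psi_quot_at y 0 h\<bar> \<le> dpsi_at y 0"
    by (rule AE_I2) (use psi_quot_at_0_le psi_quot_at_nonneg in \<open>auto\<close>)
  show ?thesis using mean_psi_has_derivative_dominated[OF gi _ b] by simp
qed

lemma dpsi_at_nonneg: "0 \<le> dpsi_at y \<sigma>" using psi_quot_at_nonneg[of y \<sigma> 0] by (simp add: psi_quot_at_0)

lemma mean_psi_quot_at_top: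
  assumes "\<not> integrable unit_cell (\<lambda>y. dpsi_at y 0)"
  shows "filterlim (\<lambda>h. mean_psi h / h) at_top (at 0)"
  unfolding filterlim_at_top
proof
  fix K :: real
  interpret finite_measure unit_cell by (rule finite_measure_unit_cell)
  obtain n :: nat where n: "K < integral\<^sup>L unit_cell (\<lambda>y. min (dpsi_at y 0) (real n))"
    using integral_truncation_unbounded[OF finite_measure_unit_cell
        borel_measurable_unit_cell[OF borel_measurable_dpsi_at] dpsi_at_nonneg assms] by blast
  define m where "m h y = min (psi_quot_at y 0 h) (real n)" for h y
  have mi: "integrable unit_cell (m h)" for h
  proof (rule integrable_const_bound[where B="real n"])
    show "AE x in unit_cell. norm (m h x) \<le> real n" using psi_quot_at_nonneg by (auto simp: m_def)
    show "m h \<in> borel_measurable unit_cell" unfolding m_def by (rule borel_measurable_unit_cell) measurable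
  qed
  have cm: "isCont (\<lambda>h. integral\<^sup>L unit_cell (m h)) 0"
  proof (rule integral_isCont_dominated[where g="\<lambda>y. real n" and r=1])
    show "\<And>h. m h \<in> borel_measurable unit_cell" unfolding m_def by (rule borel_measurable_unit_cell) measurable
    show "AE y in unit_cell. \<forall>h. \<bar>h - 0\<bar> < 1 \<longrightarrow> \<bar>m h y\<bar> \<le> real n"
      using psi_quot_at_nonneg by (auto simp: m_def)
    show "AE y in unit_cell. isCont (\<lambda>h. m h y) 0"
      using isCont_psi_quot_at[of 0] by eventually_elim (simp add: m_def continuous_intros)
    show "integrable unit_cell (\<lambda>y. real n)" by simp
  qed (rule zero_less_one)
  have "m 0 = (\<lambda>y. min (dpsi_at y 0) (real n))" by (rule ext) (simp add: m_def psi_quot_at_0)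
  then have "\<forall>\<^sub>F h in at 0. K < integral\<^sup>L unit_cell (m h)"
    using cm n unfolding isCont_def by (intro order_tendstoD(1)) auto
  moreover have "\<forall>\<^sub>F h in at 0. h \<noteq> 0" by (simp add: eventually_at_filter)
  ultimately show "\<forall>\<^sub>F h in at 0. K \<le> mean_psi h / h"
  proof eventually_elim
    case (elim h)
    have ih: "integrable unit_cell (\<lambda>y. psi_quot_at y 0 h)"
      using elim(2) by (simp add: psi_quot_at_def) (intro integrable_divide Bochner_Integration.integrable_diff integrable_psi_at)
    have "integral\<^sup>L unit_cell (m h) \<le> integral\<^sup>L unit_cell (\<lambda>y. psi_quot_at y 0 h)"
      by (rule integral_mono[OF mi ih]) (simp add: m_def)
    also have "\<dots> = mean_psi h / h" using mean_psi_quot_eq[OF elim(2), of 0] by (simp add: mean_psi_0)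
    finally show ?case using elim(1) by simp
  qed
qed

text \<open>The value 0 when 1 / W'' is not integrable is not a junk default: it is the actual
  derivative of stress at 0 in that case.\<close>

definition "curvature \<sigma> = (if integrable unit_cell (\<lambda>y. dpsi_at y \<sigma>) then 1 / integral\<^sup>L unit_cell (\<lambda>y. dpsi_at y \<sigma>) else 0)"

lemma integral_dpsi_at_pos: assumes "integrable unit_cell (\<lambda>y. dpsi_at y \<sigma>)" shows "0 < integral\<^sup>L unit_cell (\<lambda>y. dpsi_at y \<sigma>)"
proof -
  interpret finite_measure unit_cell by (rule finite_measure_unit_cell)
  have "AE y in unit_cell. 0 < dpsi_at y \<sigma>"
    using AE_good_cells
  proof eventually_elim
    case (elim y)
    interpret o: cell_energy "W y" p c1 c2 by (rule cell_energy_at[OF elim])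
    show ?case using o.dpsi_pos[of \<sigma>] dpsi_at_good[OF elim, of \<sigma>] by simp
  qed
  moreover have "emeasure unit_cell (space unit_cell) \<noteq> 0" using measure_space_unit_cell by (simp add: emeasure_eq_measure)
  ultimately have "integral\<^sup>L unit_cell (\<lambda>y. 0) < integral\<^sup>L unit_cell (\<lambda>y. dpsi_at y \<sigma>)"
    by (intro integral_less_AE_space assms) auto
  then show ?thesis by simp
qed

lemma curvature_nonneg: "0 \<le> curvature \<sigma>"
  unfolding curvature_def using integral_dpsi_at_pos[of \<sigma>] by auto

lemma stress_has_derivative_0_if_not_integrable:
  assumes "\<not> integrable unit_cell (\<lambda>y. dpsi_at y 0)"
  shows "(stress has_real_derivative 0) (at 0)"
proof -
  have "filterlim stress (at 0) (at 0)"
  proof (rule filterlim_atI)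
    show "(stress \<longlongrightarrow> 0) (at 0)" using isCont_stress[of 0] stress_0 unfolding isCont_def by simp
    have "stress h \<noteq> 0" if "h \<noteq> 0" for h using mean_psi_stress[of h] mean_psi_0 that by auto
    then show "\<forall>\<^sub>F h in at 0. stress h \<noteq> 0" by (auto simp: eventually_at_filter)
  qed
  from filterlim_compose[OF mean_psi_quot_at_top[OF assms] this]
  have "filterlim (\<lambda>h. h / stress h) at_top (at 0)" by (simp add: mean_psi_stress)
  then have "((\<lambda>h. inverse (h / stress h)) \<longlongrightarrow> 0) (at 0)" by (rule tendsto_inverse_0_at_top)
  then show ?thesis by (simp add: DERIV_def stress_0)
qed

lemma stress_has_derivative: "(stress has_real_derivative curvature (stress \<xi>)) (at \<xi>)"
proof (cases "integrable unit_cell (\<lambda>y. dpsi_at y (stress \<xi>))")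
  case True
  let ?D = "integral\<^sup>L unit_cell (\<lambda>y. dpsi_at y (stress \<xi>))"
  have "(mean_psi has_real_derivative ?D) (at (stress \<xi>))"
    using True mean_psi_has_derivative_0 mean_psi_has_derivative_nonzero(2)
    by (cases "stress \<xi> = 0") auto
  then have "(stress has_real_derivative inverse ?D) (at \<xi>)"
    by (rule DERIV_inverse_function[where a="\<xi> - 1" and b="\<xi> + 1"])
       (use integral_dpsi_at_pos[OF True] mean_psi_stress isCont_stress in auto)
  then show ?thesis using True by (simp add: curvature_def inverse_eq_divide)
next
  case False
  then have "stress \<xi> = 0" using mean_psi_has_derivative_nonzero(1)[of "stress \<xi>"] by auto
  moreover from this have "\<xi> = 0" using mean_psi_stress[of \<xi>] mean_psi_0 by simp
  ultimately show ?thesis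
    using False stress_has_derivative_0_if_not_integrable by (simp add: curvature_def)
qed

lemma deriv_Wstar: "deriv (Wstar p W) = stress"
  by (rule ext, rule DERIV_imp_deriv, rule Wstar_has_derivative)

lemma deriv2_Wstar: "deriv (deriv (Wstar p W)) \<xi> = curvature (stress \<xi>)"
  unfolding deriv_Wstar by (rule DERIV_imp_deriv, rule stress_has_derivative)

lemma dpsi_at_antimono_pos: "0 \<le> a \<Longrightarrow> a \<le> b \<Longrightarrow> dpsi_at y b \<le> dpsi_at y a"
proof (cases "y \<in> good_cells")
  case True
  interpret o: cell_energy "W y" p c1 c2 by (rule cell_energy_at[OF True])
  show "0 \<le> a \<Longrightarrow> a \<le> b \<Longrightarrow> ?thesis" using o.dpsi_mono_pos by (simp add: dpsi_at_good[OF True])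
qed (simp add: dpsi_at_bad)

lemma dpsi_at_mono_neg: "a \<le> b \<Longrightarrow> b \<le> 0 \<Longrightarrow> dpsi_at y a \<le> dpsi_at y b"
proof (cases "y \<in> good_cells")
  case True
  interpret o: cell_energy "W y" p c1 c2 by (rule cell_energy_at[OF True])
  show "a \<le> b \<Longrightarrow> b \<le> 0 \<Longrightarrow> ?thesis" using o.dpsi_mono_neg by (simp add: dpsi_at_good[OF True])
qed (simp add: dpsi_at_bad)

end

section \<open>Comparison of two densities\<close>

locale density_comparison =
  W1: periodic_density p W1 a1 a2 + W2: periodic_density p W2 b1 b2
  for p W1 a1 a2 W2 b1 b2 +
  assumes comparison: "\<And>\<xi> \<zeta>. AE y in lborel. y \<in> {0<..<1} \<longrightarrow>
           \<xi> * deriv (W2 y) \<xi> \<ge> \<xi> * deriv (W1 y) \<xi> \<and>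
           deriv (deriv (W2 y)) (recip_psi W2 y \<zeta>) \<ge> deriv (deriv (W1 y)) (recip_psi W1 y \<zeta>)"
begin

text \<open>The first comparison hypothesis is only available almost everywhere for each fixed
  slope; restricting to rational slopes yields one null set, and density of the rationals
  suffices because the derivatives are strictly increasing.\<close>

lemma AE_deriv_le_rat: "AE y in unit_cell. \<forall>r\<in>\<rat>. r * deriv (W1 y) r \<le> r * deriv (W2 y) r"
proof -
  have "AE y in lborel. \<forall>r\<in>\<rat>. y \<in> {0<..<1} \<longrightarrow> r * deriv (W1 y) r \<le> r * deriv (W2 y) r"
  proof (rule AE_ball_countable'[OF _ countable_rat])
    fix r :: real
    show "AE y in lborel. y \<in> {0<..<1} \<longrightarrow> r * deriv (W1 y) r \<le> r * deriv (W2 y) r"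
      using comparison[of r 0] by eventually_elim blast
  qed
  then show ?thesis by (intro AE_unit_cellI) (auto elim: eventually_mono)
qed

lemma psi_at_le_pos: "0 \<le> \<tau> \<Longrightarrow> AE y in unit_cell. W2.psi_at y \<tau> \<le> W1.psi_at y \<tau>"
  using AE_deriv_le_rat W1.AE_good_cells W2.AE_good_cells
  by eventually_elim (simp add: W1.psi_at_good W2.psi_at_good
      cell_energy_psi_le_pos[OF W1.cell_energy_at W2.cell_energy_at])

lemma psi_at_le_neg: "\<tau> \<le> 0 \<Longrightarrow> AE y in unit_cell. W1.psi_at y \<tau> \<le> W2.psi_at y \<tau>"
  using AE_deriv_le_rat W1.AE_good_cells W2.AE_good_cells
  by eventually_elim (simp add: W1.psi_at_good W2.psi_at_good
      cell_energy_psi_le_neg[OF W1.cell_energy_at W2.cell_energy_at])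

lemma dpsi_at_le: "AE y in unit_cell. W2.dpsi_at y \<zeta> \<le> W1.dpsi_at y \<zeta>"
proof -
  have "AE y in unit_cell. deriv (deriv (W1 y)) (recip_psi W1 y \<zeta>) \<le> deriv (deriv (W2 y)) (recip_psi W2 y \<zeta>)"
    by (rule AE_unit_cellI) (use comparison[of 0 \<zeta>] in \<open>auto elim: eventually_mono\<close>)
  then show ?thesis using W1.AE_good_cells W2.AE_good_cells
  proof eventually_elim
    case (elim y)
    interpret o: cell_energy "W1 y" p a1 a2 by (rule W1.cell_energy_at[OF elim(2)])
    have "0 < deriv (deriv (W1 y)) (recip_psi W1 y \<zeta>)" by (rule o.pos)
    then show ?case using elim by (simp add: W1.dpsi_at_def W2.dpsi_at_def frac_le)
  qed
qed

lemma mean_psi_le_pos: "0 \<le> \<tau> \<Longrightarrow> W2.mean_psi \<tau> \<le> W1.mean_psi \<tau>"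
  unfolding W1.mean_psi_def W2.mean_psi_def
  by (rule integral_mono_AE[OF W2.integrable_psi_at W1.integrable_psi_at psi_at_le_pos])

lemma mean_psi_le_neg: "\<tau> \<le> 0 \<Longrightarrow> W1.mean_psi \<tau> \<le> W2.mean_psi \<tau>"
  unfolding W1.mean_psi_def W2.mean_psi_def
  by (rule integral_mono_AE[OF W1.integrable_psi_at W2.integrable_psi_at psi_at_le_neg])

lemma stress_le_pos: "0 < \<xi> \<Longrightarrow> W1.stress \<xi> \<le> W2.stress \<xi>"
  using mean_psi_le_pos[of "W1.stress \<xi>"] W1.stress_pos[of \<xi>] W2.mean_psi_le_iff[of "W1.stress \<xi>" "W2.stress \<xi>"]
  by (simp add: W1.mean_psi_stress W2.mean_psi_stress)

lemma stress_le_neg: "\<xi> < 0 \<Longrightarrow> W2.stress \<xi> \<le> W1.stress \<xi>"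
  using mean_psi_le_neg[of "W1.stress \<xi>"] W1.stress_neg[of \<xi>] W2.mean_psi_le_iff[of "W2.stress \<xi>" "W1.stress \<xi>"]
  by (simp add: W1.mean_psi_stress W2.mean_psi_stress)

text \<open>The two stresses lie on the same side of 0 and the smaller one in absolute value is
  the first; this is where the monotonicity of the second derivatives on each half line enters.\<close>

lemma dpsi_at_stress_le:
  assumes "\<xi> \<noteq> 0"
  shows "AE y in unit_cell. W2.dpsi_at y (W2.stress \<xi>) \<le> W1.dpsi_at y (W1.stress \<xi>)"
  using dpsi_at_le[of "W1.stress \<xi>"]
proof eventually_elim
  case (elim y)
  have "W2.dpsi_at y (W2.stress \<xi>) \<le> W2.dpsi_at y (W1.stress \<xi>)"
  proof (cases "0 < \<xi>")
    case True
    then show ?thesis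
      using W1.stress_pos stress_le_pos by (intro W2.dpsi_at_antimono_pos) (auto intro: less_imp_le)
  next
    case False
    then have "\<xi> < 0" using assms by simp
    then show ?thesis
      using W1.stress_neg stress_le_neg by (intro W2.dpsi_at_mono_neg) (auto intro: less_imp_le)
  qed
  with elim show ?case by linarith
qed

lemma curvature_le_if_dpsi_at_le:
  assumes int1: "integrable unit_cell (\<lambda>y. W1.dpsi_at y s1)"
    and le: "AE y in unit_cell. W2.dpsi_at y s2 \<le> W1.dpsi_at y s1"
  shows "W1.curvature s1 \<le> W2.curvature s2"
proof -
  have int2: "integrable unit_cell (\<lambda>y. W2.dpsi_at y s2)"
  proof (rule Bochner_Integration.integrable_bound[OF int1])
    show "(\<lambda>y. W2.dpsi_at y s2) \<in> borel_measurable unit_cell"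
      by (rule borel_measurable_unit_cell) (rule W2.borel_measurable_dpsi_at)
    show "AE y in unit_cell. norm (W2.dpsi_at y s2) \<le> norm (W1.dpsi_at y s1)"
      using le by eventually_elim (use W1.dpsi_at_nonneg W2.dpsi_at_nonneg in auto)
  qed
  have "integral\<^sup>L unit_cell (\<lambda>y. W2.dpsi_at y s2) \<le> integral\<^sup>L unit_cell (\<lambda>y. W1.dpsi_at y s1)"
    by (rule integral_mono_AE[OF int2 int1 le])
  with W2.integral_dpsi_at_pos[OF int2] show ?thesis
    using int1 int2 by (simp add: W1.curvature_def W2.curvature_def frac_le)
qed

lemma curvature_stress_le: "W1.curvature (W1.stress \<xi>) \<le> W2.curvature (W2.stress \<xi>)"
proof (cases "\<xi> = 0")
  case True
  show ?thesis
  proof (cases "integrable unit_cell (\<lambda>y. W1.dpsi_at y 0)")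
    case True
    then show ?thesis
      using curvature_le_if_dpsi_at_le[OF _ dpsi_at_le] \<open>\<xi> = 0\<close> by (simp add: W1.stress_0 W2.stress_0)
  next
    case False
    then show ?thesis using \<open>\<xi> = 0\<close> W2.curvature_nonneg by (simp add: W1.stress_0 W1.curvature_def)
  qed
next
  case False
  have "W1.stress \<xi> \<noteq> 0" using False W1.stress_pos[of \<xi>] W1.stress_neg[of \<xi>] by linarith
  then show ?thesis
    using curvature_le_if_dpsi_at_le[OF W1.mean_psi_has_derivative_nonzero(1) dpsi_at_stress_le[OF False]]
    by simp
qed

end

lemma thrice_differentiable_derivs:
  assumes "\<exists>D1 D2 D3. \<forall>\<xi>. (f has_real_derivative D1 \<xi>) (at \<xi>) \<and>
    (D1 has_real_derivative D2 \<xi>) (at \<xi>) \<and> (D2 has_real_derivative D3 \<xi>) (at \<xi>) \<and> isCont D3 \<xi>"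
  shows "(f has_real_derivative deriv f x) (at x)"
    and "(deriv f has_real_derivative deriv (deriv f) x) (at x)"
    and "isCont (deriv (deriv f)) x"
proof -
  obtain D1 D2 D3 where D: "\<And>\<xi>. (f has_real_derivative D1 \<xi>) (at \<xi>)"
      "\<And>\<xi>. (D1 has_real_derivative D2 \<xi>) (at \<xi>)" "\<And>\<xi>. (D2 has_real_derivative D3 \<xi>) (at \<xi>)"
    using assms by metis
  have D1: "deriv f = D1" and D2: "deriv D1 = D2" by (auto intro!: DERIV_imp_deriv D)
  show "(f has_real_derivative deriv f x) (at x)" unfolding D1 by (rule D(1))
  show "(deriv f has_real_derivative deriv (deriv f) x) (at x)" unfolding D1 D2 by (rule D(2))
  show "isCont (deriv (deriv f)) x" unfolding D1 D2 by (rule DERIV_isCont[OF D(3)])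
qed

lemma energy_density_periodic_density:
  assumes "2 \<le> p" and "energy_density p W"
    and "AE y in lborel. y \<in> {0<..<1} \<longrightarrow>
           (\<forall>\<xi>. W y 0 \<le> W y \<xi>) \<and>
           (\<forall>a b. 0 \<le> a \<longrightarrow> a \<le> b \<longrightarrow> deriv (deriv (W y)) a \<le> deriv (deriv (W y)) b) \<and>
           (\<forall>a b. a \<le> b \<longrightarrow> b \<le> 0 \<longrightarrow> deriv (deriv (W y)) b \<le> deriv (deriv (W y)) a)"
  shows "\<exists>c1 c2. periodic_density p W c1 c2"
proof -
  obtain c1 c2 where "0 < c1" "\<And>y \<xi>. c1 * \<bar>\<xi>\<bar> powr p \<le> W y \<xi>" "\<And>y \<xi>. W y \<xi> \<le> c2 * (1 + \<bar>\<xi>\<bar> powr p)"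
    using assms(2) unfolding energy_density_def by blast
  moreover have "\<And>\<xi>. (\<lambda>y. W y \<xi>) \<in> borel_measurable lborel"
    and "AE y in lborel. \<forall>\<xi>. deriv (deriv (W y)) \<xi> > 0"
    and "\<And>y. \<exists>D1 D2 D3. \<forall>\<xi>. (W y has_real_derivative D1 \<xi>) (at \<xi>) \<and>
          (D1 has_real_derivative D2 \<xi>) (at \<xi>) \<and> (D2 has_real_derivative D3 \<xi>) (at \<xi>) \<and> isCont D3 \<xi>"
    using assms(2) unfolding energy_density_def by blast+
  moreover note assms(1,3)
  ultimately have "periodic_density p W c1 c2"
    by (intro periodic_density.intro thrice_differentiable_derivs) (auto elim: AE_mp intro: AE_I2)
  then show ?thesis by blast
qed

theorem lemma10:
  fixes p :: real and W1 W2 :: "real \<Rightarrow> real \<Rightarrow> real"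
  assumes "2 \<le> p"
    and "energy_density p W1" and "energy_density p W2"
    and "\<And>W. W \<in> {W1, W2} \<Longrightarrow> AE y in lborel. y \<in> {0<..<1} \<longrightarrow>
           (\<forall>\<xi>. W y 0 \<le> W y \<xi>) \<and>
           (\<forall>a b. 0 \<le> a \<longrightarrow> a \<le> b \<longrightarrow> deriv (deriv (W y)) a \<le> deriv (deriv (W y)) b) \<and>
           (\<forall>a b. a \<le> b \<longrightarrow> b \<le> 0 \<longrightarrow> deriv (deriv (W y)) b \<le> deriv (deriv (W y)) a)"
    and "\<And>\<xi> \<zeta>. AE y in lborel. y \<in> {0<..<1} \<longrightarrow>
           \<xi> * deriv (W2 y) \<xi> \<ge> \<xi> * deriv (W1 y) \<xi> \<and>
           deriv (deriv (W2 y)) (recip_psi W2 y \<zeta>) \<ge> deriv (deriv (W1 y)) (recip_psi W1 y \<zeta>)"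
  shows "\<forall>\<xi>. deriv (deriv (Wstar p W2)) \<xi> \<ge> deriv (deriv (Wstar p W1)) \<xi>"
proof -
  obtain a1 a2 where "periodic_density p W1 a1 a2"
    using energy_density_periodic_density[OF assms(1,2) assms(4)[of W1]] by auto
  moreover obtain b1 b2 where "periodic_density p W2 b1 b2"
    using energy_density_periodic_density[OF assms(1,3) assms(4)[of W2]] by auto
  ultimately interpret density_comparison p W1 a1 a2 W2 b1 b2
    by (intro density_comparison.intro density_comparison_axioms.intro assms(5))
  show ?thesis using curvature_stress_le by (simp add: W1.deriv2_Wstar W2.deriv2_Wstar)
qed

end
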